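(* There is an algorithm which takes as input a string $x\in\{0,1\}^n$ and outputs the size of $G_{x,\leq n}$ in time polynomial in $n$.
   Context: Binary strings are compared in lexicographic order with $0<1$. For $y\in\{0,1\}^n$, $\mathsf{Orbit}(y)$ is the set of all cyclic rotations of $y$. For an orbit $E$ and $x$, $E<x$ means $E$ contains a string lexicographically less than $x$; $\mathcal{C}_x$ is the set of orbits $E$ with $E<x$; and $G_{x,\leq n}=\bigcup_{E\in\mathcal{C}_x}E$, i.e., the set of $y\in\{0,1\}^n$ some cyclic rotation of which is lexicographically less than $x$. *)

theory Defs
  imports Main
begin

text \<open>Binary strings are bool lists, False = 0, True = 1 (so 0 < 1).
  Lexicographic order on strings: the library's lexord w.r.t. the strict order on bool.\<close>

definition lex_less :: "bool list \<Rightarrow> bool list \<Rightarrow> bool" where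
  "lex_less y x \<longleftrightarrow> (y, x) \<in> lexord {(a, b). a < b}"

definition Orbit :: "bool list \<Rightarrow> bool list set" where
  "Orbit y = range (\<lambda>k. rotate k y)"

definition orbit_less :: "bool list set \<Rightarrow> bool list \<Rightarrow> bool" where
  "orbit_less E x \<longleftrightarrow> (\<exists>z\<in>E. lex_less z x)"

definition C_orbits :: "bool list \<Rightarrow> bool list set set" where
  "C_orbits x = {E. (\<exists>y. length y = length x \<and> E = Orbit y) \<and> orbit_less E x}"

definition G_set :: "bool list \<Rightarrow> bool list set" where
  "G_set x = \<Union> (C_orbits x)"

text \<open>Available operations
  are constants, addition, truncated subtraction, halving and parity (no multiplication),
  so register bit-lengths grow at most linearly in the number of steps and unit cost is
  polynomially equivalent to Turing machine time.\<close>

datatype aexp = N nat | V nat | Plus aexp aexp | Minus aexp aexp | Half aexp | Par aexp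

datatype bexp = Less aexp aexp | Not bexp | And bexp bexp

datatype com = Skip | Assign nat aexp | Seq com com | If bexp com com | While bexp com

type_synonym state = "nat \<Rightarrow> nat"

fun aval :: "aexp \<Rightarrow> state \<Rightarrow> nat" where
  "aval (N c) s = c"
| "aval (V r) s = s r"
| "aval (Plus a b) s = aval a s + aval b s"
| "aval (Minus a b) s = aval a s - aval b s"
| "aval (Half a) s = aval a s div 2"
| "aval (Par a) s = aval a s mod 2"

fun bval :: "bexp \<Rightarrow> state \<Rightarrow> bool" where
  "bval (Less a b) s = (aval a s < aval b s)"
| "bval (Not b) s = (\<not> bval b s)"
| "bval (And b1 b2) s = (bval b1 s \<and> bval b2 s)"

inductive exec :: "com \<Rightarrow> state \<Rightarrow> nat \<Rightarrow> state \<Rightarrow> bool" where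
  Skip: "exec Skip s 1 s"
| Assign: "exec (Assign r a) s 1 (s(r := aval a s))"
| Seq: "exec c1 s t1 s1 \<Longrightarrow> exec c2 s1 t2 s2 \<Longrightarrow> exec (Seq c1 c2) s (t1 + t2 + 1) s2"
| IfTrue: "bval b s \<Longrightarrow> exec c1 s t s' \<Longrightarrow> exec (If b c1 c2) s (t + 1) s'"
| IfFalse: "\<not> bval b s \<Longrightarrow> exec c2 s t s' \<Longrightarrow> exec (If b c1 c2) s (t + 1) s'"
| WhileFalse: "\<not> bval b s \<Longrightarrow> exec (While b c) s 1 s"
| WhileTrue: "bval b s \<Longrightarrow> exec c s t1 s1 \<Longrightarrow> exec (While b c) s1 t2 s2 \<Longrightarrow>
    exec (While b c) s (t1 + t2 + 1) s2"

text \<open>Input encoding: the string x = x_1...x_n is given in register 0 as the number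
  with binary representation 1 x_1 ... x_n (leading 1 keeps leading zeros);
  all other registers are 0. The output is read from register 1.\<close>
definition encode :: "bool list \<Rightarrow> nat" where
  "encode x = foldl (\<lambda>a b. 2 * a + (if b then 1 else 0)) 1 x"

definition init_state :: "bool list \<Rightarrow> state" where
  "init_state x = (\<lambda>_. 0)(0 := encode x)"

end

theory Submission
  imports Defs
begin

text \<open>A string y of length n has a rotation below x iff its square y @ y contains a witness:
  a window that agrees with x_0 ... x_{j-1} and then has 0 where x_j = 1. Witnesses are
  detected by the Knuth-Morris-Pratt automaton of x, whose state is the length of the longest
  suffix read so far that is a prefix of x. As |y| = |x|, the state reached after y does not
  depend on where the scan started, so y has no rotation below x iff the automaton, started
  in the state q it reaches on y, reads y once more without producing a witness (and then
  necessarily ends in q).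
  Summing over q, the strings outside G_x are the closed witness-free walks of length n,
  counted by a dynamic program over n + 1 states. This dynamic program can be run with only
  addition, halving and parity: each vector of n + 1 counts (all below 2^(n+1)) is packed
  into a single register, so every step takes time polynomial in n.\<close>

section \<open>Rotations, orbits and lexicographic comparison\<close>

lemma nth_double: "i < 2 * length y \<Longrightarrow> (y @ y) ! i = y ! (i mod length y)"
proof (cases "i < length y")
  case True
  then show ?thesis by (simp add: nth_append_left)
next
  case False
  assume "i < 2 * length y"
  with False have "i mod length y = i - length y"
    by (simp add: le_mod_geq)
  with False show ?thesis by (simp add: nth_append_right)
qed

lemma lex_less_iff_nth:
  assumes "length z = length x"
  shows "lex_less z x \<longleftrightarrow> (\<exists>j<length x. (\<forall>l<j. z ! l = x ! l) \<and> \<not> z ! j \<and> x ! j)"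
proof -
  have "take j z = take j x \<longleftrightarrow> (\<forall>l<j. z ! l = x ! l)" if "j < length x" for j
    using assms that by (simp add: list_eq_iff_nth_eq min_absorb2)
  then show ?thesis
    using assms unfolding lex_less_def lexord_take_index_conv by (auto simp: less_bool_def)
qed

lemma rotate_rotate_back: "rotate m z = rotate (m + k * (length z - 1)) (rotate k z)"
proof (cases z)
  case Nil
  then show ?thesis by simp
next
  case (Cons a as)
  have "rotate (m + k * (length z - 1)) (rotate k z) = rotate (m + k * length z) z"
    by (simp add: rotate_rotate Cons algebra_simps)
  also have "\<dots> = rotate ((m + k * length z) mod length z) z"
    by (rule rotate_conv_mod)
  also have "\<dots> = rotate m z"
    by (simp add: rotate_conv_mod[symmetric])
  finally show ?thesis ..
qed

lemma Orbit_eq_if_mem: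
  assumes "y \<in> Orbit z"
  shows "Orbit y = Orbit z" and "length y = length z"
proof -
  obtain k where y: "y = rotate k z"
    using assms by (auto simp: Orbit_def)
  have "Orbit y \<subseteq> Orbit z"
    unfolding Orbit_def y by (auto simp: rotate_rotate)
  moreover have "Orbit z \<subseteq> Orbit y"
    unfolding Orbit_def y using rotate_rotate_back by blast
  ultimately show "Orbit y = Orbit z" by blast
  show "length y = length z" by (simp add: y)
qed

lemma G_set_eq: "G_set x = {y. length y = length x \<and> (\<exists>k. lex_less (rotate k y) x)}"
proof (intro set_eqI iffI)
  fix y assume "y \<in> G_set x"
  then obtain z where z: "length z = length x" "y \<in> Orbit z" "\<exists>w\<in>Orbit z. lex_less w x"
    by (auto simp: G_set_def C_orbits_def orbit_less_def)
  then have "Orbit y = Orbit z" "length y = length x"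
    using Orbit_eq_if_mem by auto
  moreover obtain w where "w \<in> Orbit z" "lex_less w x"
    using z(3) ..
  ultimately have "w \<in> Orbit y"
    by simp
  then obtain k where "w = rotate k y"
    by (auto simp: Orbit_def)
  with \<open>lex_less w x\<close> have "lex_less (rotate k y) x"
    by simp
  with \<open>length y = length x\<close> show "y \<in> {y. length y = length x \<and> (\<exists>k. lex_less (rotate k y) x)}"
    by blast
next
  fix y assume y: "y \<in> {y. length y = length x \<and> (\<exists>k. lex_less (rotate k y) x)}"
  then have "Orbit y \<in> C_orbits x"
    by (auto simp: C_orbits_def orbit_less_def Orbit_def)
  moreover have "y \<in> Orbit y"
    unfolding Orbit_def by (metis rangeI rotate0 id_apply)
  ultimately show "y \<in> G_set x"
    by (auto simp: G_set_def)
qed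


definition words :: "nat \<Rightarrow> bool list set" where
  "words m = {v. length v = m}"

lemma words_lists: "words m = {xs. set xs \<subseteq> UNIV \<and> length xs = m}"
  by (simp add: words_def)

lemma finite_words: "finite (words m)"
  unfolding words_lists by (rule finite_lists_length_eq) simp

lemma card_words: "card (words m) = 2 ^ m"
  unfolding words_lists using card_lists_length_eq[of "UNIV :: bool set" m] by simp

lemma words_0: "words 0 = {[]}"
  by (auto simp: words_def)

lemma words_Suc: "words (Suc m) = (\<lambda>v. v @ [False]) ` words m \<union> (\<lambda>v. v @ [True]) ` words m"
proof (intro set_eqI iffI)
  fix v assume "v \<in> words (Suc m)"
  then have "v \<noteq> []" and "butlast v \<in> words m"
    by (auto simp: words_def)
  then have "v = butlast v @ [last v]" and "butlast v \<in> words m"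
    by simp_all
  then have "v \<in> (\<lambda>w. w @ [last v]) ` words m"
    by (rule image_eqI)
  then show "v \<in> (\<lambda>v. v @ [False]) ` words m \<union> (\<lambda>v. v @ [True]) ` words m"
    by (cases "last v") auto
qed (auto simp: words_def)

lemma sum_words_Suc:
  "(\<Sum>v\<in>words (Suc m). g v) = (\<Sum>v\<in>words m. g (v @ [False]) + g (v @ [True]))"
proof -
  have "(\<Sum>v\<in>words (Suc m). g v)
      = (\<Sum>v\<in>(\<lambda>v. v @ [False]) ` words m. g v) + (\<Sum>v\<in>(\<lambda>v. v @ [True]) ` words m. g v)"
    unfolding words_Suc by (rule sum.union_disjoint) (auto simp: finite_words)
  also have "\<dots> = (\<Sum>v\<in>words m. g (v @ [False])) + (\<Sum>v\<in>words m. g (v @ [True]))"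
    by (simp add: sum.reindex inj_on_def)
  finally show ?thesis
    by (simp add: sum.distrib)
qed

lemma of_bool_as_sum:
  assumes "finite A" "w \<in> A"
  shows "(of_bool (P w) :: 'b::comm_semiring_1) = (\<Sum>a\<in>A. of_bool (w = a \<and> P a))"
proof -
  have "(\<Sum>a\<in>A. of_bool (w = a \<and> P a) :: 'b) = (\<Sum>a\<in>A. if w = a then of_bool (P a) else 0)"
    by (rule sum.cong) auto
  also have "\<dots> = of_bool (P w)"
    using assms by (simp add: sum.delta)
  finally show ?thesis ..
qed

lemma card_filter_eq_sum: "finite A \<Longrightarrow> card {a \<in> A. P a} = (\<Sum>a\<in>A. of_bool (P a))"
  by (simp add: Int_def conj_commute)

section \<open>Witnesses and the Knuth--Morris--Pratt automaton of x\<close>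

context
  fixes x :: "bool list"
begin

definition witness :: "bool list \<Rightarrow> nat \<Rightarrow> nat \<Rightarrow> bool" where
  "witness w i j \<longleftrightarrow>
     i + j < length w \<and> j < length x \<and> x ! j \<and> \<not> w ! (i + j) \<and> (\<forall>l<j. w ! (i + l) = x ! l)"

definition has_witness :: "bool list \<Rightarrow> bool" where
  "has_witness w \<longleftrightarrow> (\<exists>i j. witness w i j)"

definition new_witness :: "bool list \<Rightarrow> bool list \<Rightarrow> bool" where
  "new_witness u v \<longleftrightarrow> (\<exists>i j. witness (u @ v) i j \<and> length u \<le> i + j)"

definition overlap :: "bool list \<Rightarrow> nat \<Rightarrow> bool" where
  "overlap w k \<longleftrightarrow> k \<le> length x \<and> k \<le> length w \<and> (\<forall>l<k. w ! (length w - k + l) = x ! l)"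

definition kmp_state :: "bool list \<Rightarrow> nat" where
  "kmp_state w = Max {k. overlap w k}"

definition same_overlaps :: "bool list \<Rightarrow> bool list \<Rightarrow> bool" where
  "same_overlaps u u' \<longleftrightarrow> (\<forall>k. overlap u k = overlap u' k)"

lemma witness_append_prefix: "i + j < length w \<Longrightarrow> witness (w @ z) i j \<longleftrightarrow> witness w i j"
  unfolding witness_def by (auto simp: nth_append)

lemma witness_append_shift:
  assumes "length u \<le> i"
  shows "witness (u @ v) i j \<longleftrightarrow> witness v (i - length u) j"
proof -
  have "(u @ v) ! (i + l) = v ! (i - length u + l)" for l
    using assms by (simp add: nth_append_right add.commute add.left_commute)
  with \<open>length u \<le> i\<close> show ?thesis
    unfolding witness_def by auto
qed

lemma witness_shift: "witness v i j \<Longrightarrow> witness (u @ v) (length u + i) j"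
  using witness_append_shift[of u "length u + i" v j] by simp

lemma has_witness_iff_new_witness_Nil: "has_witness w \<longleftrightarrow> new_witness [] w"
  by (simp add: has_witness_def new_witness_def)

lemma has_witness_new_witness: "has_witness v \<Longrightarrow> new_witness u v"
  unfolding has_witness_def new_witness_def using witness_shift by fastforce

lemma not_new_witness_Nil: "\<not> new_witness u []"
  unfolding new_witness_def witness_def by auto

lemma new_witness_append:
  "new_witness u (v @ w) \<longleftrightarrow> new_witness u v \<or> new_witness (u @ v) w"
proof
  assume "new_witness u (v @ w)"
  then obtain i j where ij: "witness ((u @ v) @ w) i j" "length u \<le> i + j"
    unfolding new_witness_def by auto
  show "new_witness u v \<or> new_witness (u @ v) w"
  proof (cases "i + j < length (u @ v)")
    case True
    with ij show ?thesis
      unfolding new_witness_def using witness_append_prefix by blast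
  next
    case False
    then have "new_witness (u @ v) w"
      using ij unfolding new_witness_def by (intro exI[of _ i] exI[of _ j]) simp
    then show ?thesis ..
  qed
next
  assume "new_witness u v \<or> new_witness (u @ v) w"
  then show "new_witness u (v @ w)"
  proof
    assume "new_witness u v"
    then obtain i j where "witness (u @ v) i j" "length u \<le> i + j"
      unfolding new_witness_def by auto
    moreover from this have "i + j < length (u @ v)"
      by (simp add: witness_def)
    ultimately show ?thesis
      unfolding new_witness_def using witness_append_prefix by fastforce
  next
    assume "new_witness (u @ v) w"
    then show ?thesis
      unfolding new_witness_def by fastforce
  qed
qed

lemma rotation_less_iff_has_witness:
  assumes len: "length y = length x"
  shows "(\<exists>k. lex_less (rotate k y) x) \<longleftrightarrow> has_witness (y @ y)"
proof
  assume "\<exists>k. lex_less (rotate k y) x"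
  then obtain k where "lex_less (rotate k y) x" ..
  then obtain j where j: "j < length x" "\<forall>l<j. rotate k y ! l = x ! l" "\<not> rotate k y ! j" "x ! j"
    using len lex_less_iff_nth[of "rotate k y"] by auto
  define i where "i = k mod length y"
  have "0 < length y"
    using j(1) len by linarith
  then have i: "i < length y"
    by (simp add: i_def)
  have rot: "rotate k y ! l = (y @ y) ! (i + l)" if "l < length y" for l
  proof -
    have "rotate k y ! l = y ! ((k + l) mod length y)"
      using that by (simp add: nth_rotate)
    also have "\<dots> = y ! ((i + l) mod length y)"
      by (simp add: i_def mod_add_left_eq)
    also have "\<dots> = (y @ y) ! (i + l)"
      using i that by (simp add: nth_double)
    finally show ?thesis .
  qed
  have "witness (y @ y) i j"
    unfolding witness_def using i j len rot by auto
  then show "has_witness (y @ y)"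
    by (auto simp: has_witness_def)
next
  assume "has_witness (y @ y)"
  then obtain i j where w: "witness (y @ y) i j"
    by (auto simp: has_witness_def)
  then have ij: "i + j < 2 * length y" "j < length y"
    using len by (auto simp: witness_def)
  have rot: "rotate i y ! l = (y @ y) ! (i + l)" if "l \<le> j" for l
    using ij that by (simp add: nth_rotate nth_double)
  have "lex_less (rotate i y) x"
    using len w rot ij by (subst lex_less_iff_nth) (auto simp: witness_def intro!: exI[of _ j])
  then show "\<exists>k. lex_less (rotate k y) x" ..
qed

lemma finite_overlaps: "finite {k. overlap w k}"
  by (rule finite_subset[of _ "{..length x}"]) (auto simp: overlap_def)

lemma overlap_0: "overlap w 0"
  by (simp add: overlap_def)

lemma overlap_kmp_state: "overlap w (kmp_state w)"
  unfolding kmp_state_def using finite_overlaps overlap_0 by (metis Max_in empty_iff mem_Collect_eq)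

lemma overlap_le_kmp_state: "overlap w k \<Longrightarrow> k \<le> kmp_state w"
  unfolding kmp_state_def using finite_overlaps by simp

lemma kmp_state_le: "kmp_state w \<le> length x"
  using overlap_kmp_state[of w] by (simp add: overlap_def)

lemma overlap_take:
  "q \<le> length x \<Longrightarrow> overlap (take q x) k \<longleftrightarrow> k \<le> q \<and> (\<forall>l<k. x ! (q - k + l) = x ! l)"
  unfolding overlap_def by (auto simp: min_def)

lemma kmp_state_take: "q \<le> length x \<Longrightarrow> kmp_state (take q x) = q"
  using overlap_le_kmp_state[of "take q x" q] overlap_kmp_state[of "take q x"]
  by (simp add: overlap_take)

lemma overlap_iff_kmp_state: "overlap w k \<longleftrightarrow> overlap (take (kmp_state w) x) k"
proof -
  let ?q = "kmp_state w"
  have q: "overlap w ?q" and ql: "?q \<le> length x"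
    by (rule overlap_kmp_state, rule kmp_state_le)
  have shift: "w ! (length w - k + l) = x ! (?q - k + l)" if "k \<le> ?q" "l < k" for k l
  proof -
    have "?q - k + l < ?q"
      using that by linarith
    then have "w ! (length w - ?q + (?q - k + l)) = x ! (?q - k + l)"
      using q by (auto simp: overlap_def)
    moreover have "length w - ?q + (?q - k + l) = length w - k + l"
      using q that by (auto simp: overlap_def)
    ultimately show ?thesis by simp
  qed
  show ?thesis
  proof
    assume k: "overlap w k"
    then have "k \<le> ?q"
      by (rule overlap_le_kmp_state)
    moreover have "x ! (?q - k + l) = x ! l" if "l < k" for l
      using shift[OF \<open>k \<le> ?q\<close> that] k that unfolding overlap_def by metis
    ultimately show "overlap (take ?q x) k"
      using ql by (simp add: overlap_take)
  next
    assume "overlap (take ?q x) k"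
    then have k: "k \<le> ?q" "\<forall>l<k. x ! (?q - k + l) = x ! l"
      using ql by (auto simp: overlap_take)
    then have "w ! (length w - k + l) = x ! l" if "l < k" for l
      using shift[OF k(1) that] that by simp
    moreover have "k \<le> length w"
      using q k(1) by (simp add: overlap_def)
    ultimately show "overlap w k"
      using k(1) ql by (simp add: overlap_def)
  qed
qed

lemma same_overlaps_kmp_state: "same_overlaps w (take (kmp_state w) x)"
  unfolding same_overlaps_def using overlap_iff_kmp_state by blast

lemma same_overlaps_sym: "same_overlaps u u' \<Longrightarrow> same_overlaps u' u"
  by (simp add: same_overlaps_def)

lemma kmp_state_cong: "same_overlaps u u' \<Longrightarrow> kmp_state u = kmp_state u'"
  unfolding same_overlaps_def kmp_state_def by presburger

lemma overlap_append_short: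
  assumes "k \<le> length v"
  shows "overlap (u @ v) k \<longleftrightarrow> k \<le> length x \<and> (\<forall>l<k. v ! (length v - k + l) = x ! l)"
proof -
  have "(u @ v) ! (length u + length v - k + l) = v ! (length v - k + l)" if "l < k" for l
    using assms by (simp add: nth_append_right add_diff_assoc)
  with assms show ?thesis
    by (auto simp: overlap_def)
qed

lemma overlap_append_long:
  assumes long: "length v < k"
  shows "overlap (u @ v) k \<longleftrightarrow>
    k \<le> length x \<and> overlap u (k - length v) \<and> (\<forall>l<length v. v ! l = x ! (k - length v + l))"
    (is "_ \<longleftrightarrow> _ \<and> overlap u ?k \<and> _")
proof -
  have nth_uv: "(u @ v) ! (length u + length v - k + l) =
      (if l < ?k then u ! (length u - ?k + l) else v ! (l - ?k))"
    if "k \<le> length u + length v" for l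
  proof (cases "l < ?k")
    case True
    then have "length u + length v - k + l = length u - ?k + l" "length u - ?k + l < length u"
      using long that by linarith+
    with True show ?thesis
      by (simp add: nth_append_left)
  next
    case False
    then have "length u + length v - k + l = length u + (l - ?k)"
      using long that by linarith
    with False show ?thesis
      by (simp only: nth_append_length_plus if_False)
  qed
  show ?thesis
  proof
    assume "overlap (u @ v) k"
    then have k: "k \<le> length x" "k \<le> length u + length v"
      and eq: "\<forall>l<k. (u @ v) ! (length u + length v - k + l) = x ! l"
      by (auto simp: overlap_def)
    have "overlap u ?k"
      unfolding overlap_def
    proof (intro conjI allI impI)
      show "?k \<le> length x" "?k \<le> length u"
        using k long by linarith+
      fix l assume l: "l < ?k"
      then have "l < k"
        by linarith
      then show "u ! (length u - ?k + l) = x ! l"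
        using eq nth_uv[OF k(2), of l] if_P[OF l] by metis
    qed
    moreover have "v ! l = x ! (?k + l)" if "l < length v" for l
    proof -
      have "?k + l < k" "length u + length v - k + (?k + l) = length u + l"
        using that long k by linarith+
      then have "(u @ v) ! (length u + l) = x ! (?k + l)"
        using eq by metis
      then show ?thesis
        by simp
    qed
    ultimately show "k \<le> length x \<and> overlap u ?k \<and> (\<forall>l<length v. v ! l = x ! (?k + l))"
      using k by blast
  next
    assume "k \<le> length x \<and> overlap u ?k \<and> (\<forall>l<length v. v ! l = x ! (?k + l))"
    then have k: "k \<le> length x" "?k \<le> length u"
      and eq_u: "\<forall>l<?k. u ! (length u - ?k + l) = x ! l"
      and eq_v: "\<forall>l<length v. v ! l = x ! (?k + l)"
      by (auto simp: overlap_def)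
    have kuv: "k \<le> length u + length v"
      using k long by linarith
    have "(u @ v) ! (length u + length v - k + l) = x ! l" if "l < k" for l
    proof (cases "l < ?k")
      case True
      then show ?thesis
        using nth_uv[OF kuv, of l] eq_u by simp
    next
      case False
      then have l: "l - ?k < length v" "?k + (l - ?k) = l"
        using that long by auto
      have "(u @ v) ! (length u + length v - k + l) = v ! (l - ?k)"
        using nth_uv[OF kuv, of l] if_not_P[OF False] by metis
      also have "\<dots> = x ! l"
        using eq_v[rule_format, OF l(1)] l(2) by simp
      finally show ?thesis .
    qed
    with k kuv show "overlap (u @ v) k"
      by (simp add: overlap_def)
  qed
qed

lemma same_overlaps_append:
  assumes "same_overlaps u u'"
  shows "same_overlaps (u @ v) (u' @ v)"
  unfolding same_overlaps_def
proof
  fix k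
  show "overlap (u @ v) k = overlap (u' @ v) k"
    using assms
    by (cases "k \<le> length v") (simp_all add: same_overlaps_def overlap_append_short overlap_append_long)
qed

lemma kmp_state_append_long:
  assumes "length x \<le> length v"
  shows "kmp_state (u @ v) = kmp_state v"
proof -
  have "overlap (u @ v) k = overlap v k" for k
  proof (cases "k \<le> length v")
    case True
    then show ?thesis
      using overlap_append_short[of k v u] overlap_append_short[of k v "[]"] by simp
  next
    case False
    with assms show ?thesis
      by (auto simp: overlap_def)
  qed
  then show ?thesis
    by (simp add: kmp_state_def)
qed

lemma kmp_state_snoc: "kmp_state (w @ [c]) = kmp_state (take (kmp_state w) x @ [c])"
  by (rule kmp_state_cong[OF same_overlaps_append[OF same_overlaps_kmp_state]])

subsection \<open>Witnesses only depend on the automaton state\<close>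

lemma new_witness_transfer:
  assumes w: "witness (u @ v) i j" and ij: "length u \<le> i + j" and same: "same_overlaps u u'"
  shows "\<exists>i'. witness (u' @ v) i' j \<and> length u' \<le> i' + j"
proof (cases "length u \<le> i")
  case True
  then have "witness v (i - length u) j"
    using w witness_append_shift by blast
  then show ?thesis
    using witness_shift by fastforce
next
  case False
  txt \<open>The witness starts inside u; its part in u is an overlap of length
    k, which u' shares.\<close>
  define k where "k = length u - i"
  have W: "i + j < length u + length v" "j < length x" "x ! j" "\<not> (u @ v) ! (i + j)"
    "\<forall>l<j. (u @ v) ! (i + l) = x ! l"
    using w by (auto simp: witness_def)
  have kj: "k \<le> j" "0 < k"
    using False ij by (auto simp: k_def)
  have "overlap u k"
    unfolding overlap_def
  proof (intro conjI allI impI)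
    show "k \<le> length x" "k \<le> length u"
      using kj W by (auto simp: k_def)
    fix m assume m: "m < k"
    then have "length u - k + m = i + m" "i + m < length u" "(u @ v) ! (i + m) = x ! m"
      using False W(5) kj by (auto simp: k_def)
    then show "u ! (length u - k + m) = x ! m"
      by (simp add: nth_append_left)
  qed
  then have "overlap u' k"
    using same by (simp add: same_overlaps_def)
  then have K: "k \<le> length u'" "\<forall>m<k. u' ! (length u' - k + m) = x ! m"
    by (auto simp: overlap_def)
  define i' where "i' = length u' - k"
  have head: "(u' @ v) ! (i' + m) = x ! m" if "m < k" for m
    using K that by (simp add: i'_def nth_append_left)
  have tail: "(u' @ v) ! (i' + m) = (u @ v) ! (i + m)" if "k \<le> m" for m
  proof -
    have "i' + m = length u' + (m - k)" "i + m = length u + (m - k)"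
      using K that False by (auto simp: i'_def k_def)
    then show ?thesis
      by (simp add: nth_append_right)
  qed
  have "witness (u' @ v) i' j"
    unfolding witness_def
  proof (intro conjI allI impI)
    show "i' + j < length (u' @ v)"
      using W(1) K kj False by (simp add: i'_def k_def)
    show "j < length x" "x ! j"
      using W by auto
    show "\<not> (u' @ v) ! (i' + j)"
      using tail[OF kj(1)] W(4) by simp
    fix m assume "m < j"
    then show "(u' @ v) ! (i' + m) = x ! m"
      using head tail W(5) by (cases "m < k") auto
  qed
  moreover have "length u' \<le> i' + j"
    using K kj by (simp add: i'_def)
  ultimately show ?thesis by blast
qed

lemma new_witness_cong: "same_overlaps u u' \<Longrightarrow> new_witness u v = new_witness u' v"
  unfolding new_witness_def using new_witness_transfer same_overlaps_sym by metis

lemma new_witness_snoc: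
  "new_witness u (v @ [c]) \<longleftrightarrow> new_witness u v \<or> new_witness (take (kmp_state (u @ v)) x) [c]"
  using new_witness_append new_witness_cong[OF same_overlaps_kmp_state] by metis

lemma has_witness_double: "has_witness (y @ y) \<longleftrightarrow> new_witness (take (kmp_state y) x) y"
proof -
  have "has_witness (y @ y) \<longleftrightarrow> has_witness y \<or> new_witness y y"
    unfolding has_witness_iff_new_witness_Nil by (simp add: new_witness_append)
  also have "\<dots> \<longleftrightarrow> new_witness y y"
    using has_witness_new_witness by blast
  also have "\<dots> \<longleftrightarrow> new_witness (take (kmp_state y) x) y"
    by (rule new_witness_cong[OF same_overlaps_kmp_state])
  finally show ?thesis .
qed


definition self_match :: "nat \<Rightarrow> nat \<Rightarrow> bool" where
  "self_match a L \<longleftrightarrow> (\<forall>l<L. x ! (a + l) = x ! l)"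

lemma self_match_Suc: "self_match a (Suc j) \<longleftrightarrow> self_match a j \<and> x!(a+j) = x!j"
  by (auto simp: self_match_def less_Suc_eq)

text \<open>The transitions are defined by naive search, exactly as the program computes them.\<close>

fun step_search :: "nat \<Rightarrow> bool \<Rightarrow> nat \<Rightarrow> nat" where
  "step_search p c 0 = 0"
| "step_search p c (Suc j) = (if self_match (p - j) j \<and> x ! j = c then Suc j else step_search p c j)"

fun dies_search :: "nat \<Rightarrow> nat \<Rightarrow> bool" where
  "dies_search p 0 = False"
| "dies_search p (Suc j) = (dies_search p j \<or> self_match (p - j) j \<and> x ! j)"

definition kmp_step :: "nat \<Rightarrow> bool \<Rightarrow> nat" where
  "kmp_step p c = step_search p c (min (length x) (Suc p))"

definition kmp_dies :: "nat \<Rightarrow> bool \<Rightarrow> bool" where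
  "kmp_dies p c \<longleftrightarrow> \<not> c \<and> dies_search p (min (length x) (Suc p))"

lemma step_search_le: "step_search p c K \<le> K"
  by (induction K) auto

lemma step_search_found:
  "step_search p c K = 0 \<or>
   (\<exists>j<K. step_search p c K = Suc j \<and> self_match (p - j) j \<and> x ! j = c)"
  by (induction K) (auto simp: less_Suc_eq)

lemma step_search_maximal:
  "j < K \<Longrightarrow> self_match (p - j) j \<Longrightarrow> x ! j = c \<Longrightarrow> Suc j \<le> step_search p c K"
  by (induction K) (auto simp: less_Suc_eq step_search_le intro: le_SucI)

lemma dies_search_iff: "dies_search p K \<longleftrightarrow> (\<exists>j<K. self_match (p - j) j \<and> x ! j)"
  by (induction K) (auto simp: less_Suc_eq)

lemma kmp_step_le: "kmp_step p c \<le> length x"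
  using step_search_le[of p c "min (length x) (Suc p)"] by (simp add: kmp_step_def)

lemma overlap_take_snoc:
  assumes p: "p \<le> length x"
  shows "overlap (take p x @ [c]) (Suc j) \<longleftrightarrow>
   j < min (length x) (Suc p) \<and> self_match (p - j) j \<and> x ! j = c"
proof -
  let ?v = "take p x @ [c]"
  have lv: "length ?v = Suc p" using p by simp
  show ?thesis
  proof
    assume "overlap ?v (Suc j)"
    then have j: "j < length x" "j \<le> p" and h: "\<forall>l<Suc j. ?v ! (Suc p - Suc j + l) = x ! l"
      using lv by (auto simp: overlap_def)
    have "self_match (p - j) j"
      unfolding self_match_def
    proof (intro allI impI)
      fix l assume l: "l < j"
      then have "?v ! (Suc p - Suc j + l) = x ! l" using h by simp
      moreover have "Suc p - Suc j + l = p - j + l" "p - j + l < p" using j l by linarith+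
      ultimately show "x ! (p - j + l) = x ! l" using p by (simp add: nth_append_left)
    qed
    moreover have "?v ! (Suc p - Suc j + j) = x ! j" using h by simp
    then have "c = x ! j" using j p by (simp add: nth_append_right min_absorb2)
    ultimately show "j < min (length x) (Suc p) \<and> self_match (p - j) j \<and> x ! j = c" using j by simp
  next
    assume a: "j < min (length x) (Suc p) \<and> self_match (p - j) j \<and> x ! j = c"
    have "\<forall>l<Suc j. ?v ! (Suc p - Suc j + l) = x ! l"
    proof (intro allI impI)
      fix l assume l: "l < Suc j"
      show "?v ! (Suc p - Suc j + l) = x ! l"
      proof (cases "l < j")
        case True
        have e: "Suc p - Suc j + l = p - j + l" and lt: "p - j + l < p" using a True by linarith+
        have "x ! (p - j + l) = x ! l" using a True unfolding self_match_def by blast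
        then show ?thesis using lt p by (simp only: e nth_append_left length_take min_absorb2 nth_take)
      next
        case False
        then have "l = j" using l by simp
        then have "Suc p - Suc j + l = p" using a by simp
        then show ?thesis using a \<open>l = j\<close> p by (simp add: nth_append_right)
      qed
    qed
    then show "overlap ?v (Suc j)" using a lv by (simp add: overlap_def)
  qed
qed

lemma kmp_step_eq:
  assumes p: "p \<le> length x"
  shows "kmp_step p c = kmp_state (take p x @ [c])"
proof -
  have "Max {k. overlap (take p x @ [c]) k} = kmp_step p c"
  proof (rule Max_eqI)
    show "finite {k. overlap (take p x @ [c]) k}"
      by (rule finite_overlaps)
  next
    fix k assume k: "k \<in> {k. overlap (take p x @ [c]) k}"
    show "k \<le> kmp_step p c"
    proof (cases k)
      case (Suc j)
      with k show ?thesis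
        using overlap_take_snoc[OF p] step_search_maximal by (auto simp: kmp_step_def)
    qed simp
  next
    show "kmp_step p c \<in> {k. overlap (take p x @ [c]) k}"
      using step_search_found[of p c "min (length x) (Suc p)"] overlap_take_snoc[OF p] overlap_0
      by (auto simp: kmp_step_def)
  qed
  then show ?thesis
    by (simp add: kmp_state_def)
qed

lemma kmp_dies_iff:
  assumes p: "p \<le> length x"
  shows "kmp_dies p c \<longleftrightarrow> new_witness (take p x) [c]"
proof -
  let ?v = "take p x @ [c]"
  have "new_witness (take p x) [c] \<longleftrightarrow> (\<exists>j. j < min (length x) (Suc p) \<and> self_match (p - j) j \<and> x ! j \<and> \<not> c)"
  proof
    assume "new_witness (take p x) [c]"
    then obtain i j where "witness ?v i j" "p \<le> i + j" using p by (auto simp: new_witness_def)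
    then have ij: "i + j = p" "j < length x" "x ! j" "\<not> ?v ! (i + j)" "\<forall>l<j. ?v ! (i + l) = x ! l"
      using p by (auto simp: witness_def)
    have "\<not> c" using ij(1,4) p by (simp add: nth_append_right)
    moreover have "self_match (p - j) j"
      unfolding self_match_def
    proof (intro allI impI)
      fix l assume l: "l < j"
      then have "?v ! (i + l) = x ! l" using ij by simp
      moreover have "i + l < p" "i = p - j" using l ij by linarith+
      ultimately show "x ! (p - j + l) = x ! l" using p by (simp add: nth_append_left)
    qed
    ultimately show "\<exists>j. j < min (length x) (Suc p) \<and> self_match (p - j) j \<and> x ! j \<and> \<not> c"
      using ij by (intro exI[of _ j]) auto
  next
    assume "\<exists>j. j < min (length x) (Suc p) \<and> self_match (p - j) j \<and> x ! j \<and> \<not> c"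
    then obtain j where j: "j < length x" "j \<le> p" "self_match (p - j) j" "x ! j" "\<not> c" by auto
    have "witness ?v (p - j) j"
      unfolding witness_def
    proof (intro conjI allI impI)
      show "p - j + j < length ?v" using j p by simp
      show "j < length x" "x ! j" by (fact j(1), fact j(4))
      show "\<not> ?v ! (p - j + j)" using j p by (simp add: nth_append_right)
      fix l assume l: "l < j"
      then have "p - j + l < p" using j by linarith
      then show "?v ! (p - j + l) = x ! l" using j l p by (simp add: nth_append_left self_match_def)
    qed
    then show "new_witness (take p x) [c]" unfolding new_witness_def using j p by (intro exI[of _ "p - j"] exI[of _ j]) simp
  qed
  then show ?thesis by (auto simp: kmp_dies_def dies_search_iff)
qed


subsection \<open>Counting witness-free words by dynamic programming\<close>

definition transitions :: "nat \<Rightarrow> nat \<Rightarrow> nat" where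
  "transitions p p' = of_bool (\<not> kmp_dies p False \<and> kmp_step p False = p')
                    + of_bool (\<not> kmp_dies p True \<and> kmp_step p True = p')"

fun walks :: "nat \<Rightarrow> nat \<Rightarrow> nat \<Rightarrow> nat" where
  "walks q 0 p = of_bool (p = q)"
| "walks q (Suc m) p' = (\<Sum>p\<le>length x. transitions p p' * walks q m p)"

lemma sum_transitions:
  "(\<Sum>p'\<le>length x. transitions p p' * g p') =
   (if kmp_dies p False then 0 else g (kmp_step p False)) + (if kmp_dies p True then 0 else g (kmp_step p True))"
proof -
  have "(\<Sum>p'\<le>length x. of_bool (\<not> kmp_dies p c \<and> kmp_step p c = p') * g p') =
      (if kmp_dies p c then 0 else g (kmp_step p c))" for c
  proof -
    have "(\<Sum>p'\<le>length x. of_bool (\<not> kmp_dies p c \<and> kmp_step p c = p') * g p') =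
        (\<Sum>p'\<le>length x. if kmp_step p c = p' then (if kmp_dies p c then 0 else g p') else 0)"
      by (rule sum.cong) auto
    also have "\<dots> = (if kmp_dies p c then 0 else g (kmp_step p c))"
      using kmp_step_le by (simp add: sum.delta)
    finally show ?thesis .
  qed
  then show ?thesis
    by (simp only: transitions_def distrib_right sum.distrib)
qed

lemma of_bool_snoc_state:
  "(of_bool (kmp_state (u @ v @ [c]) = p' \<and> \<not> new_witness u (v @ [c])) :: nat) =
   (\<Sum>p\<le>length x. of_bool (kmp_state (u @ v) = p \<and> \<not> new_witness u v) *
      of_bool (\<not> kmp_dies p c \<and> kmp_step p c = p'))"
proof -
  let ?p = "kmp_state (u @ v)"
  have le: "?p \<in> {..length x}"
    by (simp add: kmp_state_le)
  have "kmp_state (u @ v @ [c]) = kmp_step ?p c"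
    using kmp_state_snoc[of "u @ v" c] kmp_step_eq kmp_state_le by simp
  moreover have "new_witness u (v @ [c]) \<longleftrightarrow> new_witness u v \<or> kmp_dies ?p c"
    using new_witness_snoc[of u v c] kmp_dies_iff kmp_state_le by simp
  ultimately have "kmp_state (u @ v @ [c]) = p' \<and> \<not> new_witness u (v @ [c]) \<longleftrightarrow>
      \<not> new_witness u v \<and> \<not> kmp_dies ?p c \<and> kmp_step ?p c = p'"
    by auto
  then have "(of_bool (kmp_state (u @ v @ [c]) = p' \<and> \<not> new_witness u (v @ [c])) :: nat) =
      (\<Sum>p\<le>length x. of_bool (?p = p \<and> \<not> new_witness u v \<and> \<not> kmp_dies p c \<and> kmp_step p c = p'))"
    using of_bool_as_sum[OF finite_atMost le, where P = "\<lambda>p. \<not> new_witness u v \<and> \<not> kmp_dies p c \<and> kmp_step p c = p'"]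
    by (simp only:)
  then show ?thesis
    by (simp only: of_bool_conj mult.assoc conj_assoc)
qed

lemma walks_eq_card:
  assumes q: "q \<le> length x"
  shows "walks q m p = card {v \<in> words m. kmp_state (take q x @ v) = p \<and> \<not> new_witness (take q x) v}"
proof (induction m arbitrary: p)
  case 0
  have "{v \<in> words 0. kmp_state (take q x @ v) = p \<and> \<not> new_witness (take q x) v} =
      (if p = q then {[]} else {})"
    using q by (auto simp: words_0 kmp_state_take not_new_witness_Nil)
  then show ?case
    by simp
next
  case (Suc m)
  let ?u = "take q x"
  let ?I = "\<lambda>v p. of_bool (kmp_state (?u @ v) = p \<and> \<not> new_witness ?u v) :: nat"
  let ?T = "\<lambda>c a. of_bool (\<not> kmp_dies a c \<and> kmp_step a c = p) :: nat"
  have "card {v \<in> words (Suc m). kmp_state (?u @ v) = p \<and> \<not> new_witness ?u v}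
      = (\<Sum>v\<in>words m. ?I (v @ [False]) p + ?I (v @ [True]) p)"
    by (simp only: card_filter_eq_sum[OF finite_words] sum_words_Suc append_assoc)
  also have "\<dots> = (\<Sum>v\<in>words m. \<Sum>a\<le>length x. ?I v a * (?T False a + ?T True a))"
    by (simp only: of_bool_snoc_state distrib_left sum.distrib)
  also have "\<dots> = (\<Sum>a\<le>length x. \<Sum>v\<in>words m. transitions a p * ?I v a)"
    by (subst sum.swap) (simp only: transitions_def mult.commute)
  also have "\<dots> = walks q (Suc m) p"
    by (simp only: walks.simps Suc.IH card_filter_eq_sum[OF finite_words] sum_distrib_left)
  finally show ?case ..
qed

lemma card_G_set_walks: "card (G_set x) = 2 ^ length x - (\<Sum>q\<le>length x. walks q (length x) q)"
proof -
  let ?n = "length x"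
  define S where "S = {y \<in> words ?n. \<not> has_witness (y @ y)}"
  have "G_set x = words ?n - S"
    unfolding G_set_eq S_def words_def using rotation_less_iff_has_witness by auto
  then have "card (G_set x) = 2 ^ ?n - card S"
    by (simp add: card_Diff_subset S_def finite_words card_words)
  moreover have "card S = (\<Sum>q\<le>?n. walks q ?n q)"
  proof -
    have "card S = (\<Sum>y\<in>words ?n. of_bool (\<not> new_witness (take (kmp_state y) x) y))"
      by (simp only: S_def card_filter_eq_sum[OF finite_words] has_witness_double)
    also have "\<dots> = (\<Sum>y\<in>words ?n. \<Sum>q\<le>?n.
        of_bool (kmp_state (take q x @ y) = q \<and> \<not> new_witness (take q x) y))"
    proof (rule sum.cong[OF refl])
      fix y assume "y \<in> words ?n"
      then have long: "kmp_state (take q x @ y) = kmp_state y" for q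
        by (simp add: words_def kmp_state_append_long)
      have "kmp_state y \<in> {..?n}"
        by (simp add: kmp_state_le)
      from of_bool_as_sum[OF finite_atMost this, where P = "\<lambda>q. \<not> new_witness (take q x) y"]
      show "(of_bool (\<not> new_witness (take (kmp_state y) x) y) :: nat) =
          (\<Sum>q\<le>?n. of_bool (kmp_state (take q x @ y) = q \<and> \<not> new_witness (take q x) y))"
        by (simp only: long)
    qed
    also have "\<dots> = (\<Sum>q\<le>?n. walks q ?n q)"
    proof (subst sum.swap, rule sum.cong[OF refl])
      fix q assume "q \<in> {..?n}"
      then have "q \<le> ?n"
        by simp
      then show "(\<Sum>y\<in>words ?n. of_bool (kmp_state (take q x @ y) = q \<and> \<not> new_witness (take q x) y)) =
          walks q ?n q"
        by (simp only: walks_eq_card card_filter_eq_sum[OF finite_words])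
    qed
    finally show ?thesis .
  qed
  ultimately show ?thesis
    by simp
qed

lemma walks_le: "q \<le> length x \<Longrightarrow> walks q m p \<le> 2 ^ m"
  by (simp add: walks_eq_card card_mono[OF finite_words] flip: card_words)

lemma walks_less:
  assumes "q \<le> length x" "m \<le> length x"
  shows "walks q m p < 2 ^ Suc (length x)"
proof -
  have "walks q m p \<le> 2 ^ m"
    using walks_le assms by auto
  also have "\<dots> \<le> 2 ^ length x"
    using \<open>m \<le> length x\<close> by (simp add: power_increasing)
  also have "\<dots> < 2 ^ Suc (length x)"
    by simp
  finally show ?thesis .
qed

end

section \<open>Vectors packed into one number\<close>

lemma div_div_commute: "(a::nat) div b div c = a div c div b"
  by (metis div_mult2_eq mult.commute)

definition pack :: "nat \<Rightarrow> (nat \<Rightarrow> nat) \<Rightarrow> nat \<Rightarrow> nat" where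
  "pack W a K = (\<Sum>i<K. a i * 2 ^ (W * i))"

lemma pack_Suc: "pack W a (Suc K) = a 0 + 2 ^ W * pack W (\<lambda>i. a (Suc i)) K"
  unfolding pack_def sum.lessThan_Suc_shift
  by (simp add: sum_distrib_left power_add algebra_simps)

lemma pack_div: "a 0 < 2 ^ W \<Longrightarrow> pack W a (Suc K) div 2 ^ W = pack W (\<lambda>i. a (Suc i)) K"
  unfolding pack_Suc by simp

lemma pack_mod: "a 0 < 2 ^ W \<Longrightarrow> pack W a (Suc K) mod 2 ^ W = a 0"
  unfolding pack_Suc by simp

lemma pack_0: "pack W a 0 = 0" by (simp add: pack_def)

lemma pack_div_power:
  "j \<le> K \<Longrightarrow> (\<And>i. a i < 2 ^ W) \<Longrightarrow> pack W a K div 2 ^ (W * j) = pack W (\<lambda>i. a (j + i)) (K - j)"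
proof (induction j)
  case 0 then show ?case by simp
next
  case (Suc j)
  then have e: "K - j = Suc (K - Suc j)" by simp
  have "(2::nat) ^ (W * Suc j) = 2 ^ (W * j) * 2 ^ W" by (simp add: power_add)
  then have "pack W a K div 2 ^ (W * Suc j) = pack W a K div 2 ^ (W * j) div 2 ^ W"
    by (simp only: div_mult2_eq)
  also have "\<dots> = pack W (\<lambda>i. a (j + i)) (K - j) div 2 ^ W" using Suc by simp
  also have "\<dots> = pack W (\<lambda>i. a (j + Suc i)) (K - Suc j)"
    unfolding e using pack_div[of "\<lambda>i. a (j + i)" W "K - Suc j"] Suc(3)[of "j + 0"] by simp
  finally show ?case by simp
qed

lemma pack_nth:
  assumes q: "q < K" and b: "\<And>i. a i < 2 ^ W"
  shows "pack W a K div 2 ^ (W * q) mod 2 ^ W = a q"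
proof -
  have "K - q = Suc (K - Suc q)"
    using q by simp
  then have "pack W a K div 2 ^ (W * q) = pack W (\<lambda>i. a (q + i)) (Suc (K - Suc q))"
    using pack_div_power[of q K a W] q b by simp
  then show ?thesis
    using pack_mod[of "\<lambda>i. a (q + i)" W] b[of "q + 0"] by simp
qed

lemma pack_walks_0:
  assumes q: "q \<le> length x"
  shows "pack W (walks x q 0) (Suc (length x)) = 2 ^ (W * q)"
proof -
  have "pack W (walks x q 0) (Suc (length x)) = (\<Sum>i<Suc (length x). if q = i then 2 ^ (W * i) else 0)"
    unfolding pack_def by (rule sum.cong) auto
  also have "\<dots> = 2 ^ (W * q)" using q by (subst sum.delta') auto
  finally show ?thesis .
qed

definition state_contrib :: "bool list \<Rightarrow> (nat \<Rightarrow> nat) \<Rightarrow> nat \<Rightarrow> nat" where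
  "state_contrib x a p = (if kmp_dies x p False then 0 else a p * 2 ^ (Suc (length x) * kmp_step x p False))
      + (if kmp_dies x p True then 0 else a p * 2 ^ (Suc (length x) * kmp_step x p True))"

lemma sum_state_contrib:
  "(\<Sum>p\<le>length x. state_contrib x a p) =
   pack (Suc (length x)) (\<lambda>p'. \<Sum>p\<le>length x. transitions x p p' * a p) (Suc (length x))"
proof -
  let ?W = "Suc (length x)"
  have "pack ?W (\<lambda>p'. \<Sum>p\<le>length x. transitions x p p' * a p) ?W
      = (\<Sum>p'\<le>length x. \<Sum>p\<le>length x. transitions x p p' * a p * 2 ^ (?W * p'))"
    by (simp only: pack_def lessThan_Suc_atMost sum_distrib_right)
  also have "\<dots> = (\<Sum>p\<le>length x. a p * (\<Sum>p'\<le>length x. transitions x p p' * 2 ^ (?W * p')))"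
    by (subst sum.swap) (simp add: sum_distrib_left mult_ac)
  also have "\<dots> = (\<Sum>p\<le>length x. state_contrib x a p)"
    by (rule sum.cong[OF refl]) (simp add: sum_transitions state_contrib_def distrib_left)
  finally show ?thesis ..
qed

section \<open>Running time of programs\<close>

notation Seq (infixr ";;" 30)
notation Assign (infix "::=" 40)

abbreviation Eq :: "aexp \<Rightarrow> aexp \<Rightarrow> bexp" where
  "Eq a b \<equiv> And (Not (Less a b)) (Not (Less b a))"

definition runs :: "com \<Rightarrow> state \<Rightarrow> nat \<Rightarrow> state \<Rightarrow> bool" where
  "runs c s T s' \<longleftrightarrow> (\<exists>t. exec c s t s' \<and> t \<le> T)"

lemma runs_Assign: "runs (Assign r a) s 1 (s(r := aval a s))"
  unfolding runs_def using exec.Assign by blast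

lemma runs_Assign_eq: "v = aval a s \<Longrightarrow> runs (Assign r a) s 1 (s(r := v))"
  using runs_Assign by simp

lemma runs_Skip: "runs Skip s 1 s"
  unfolding runs_def using exec.Skip by blast

lemma runs_Seq: "runs c1 s T1 s1 \<Longrightarrow> runs c2 s1 T2 s2 \<Longrightarrow> runs (Seq c1 c2) s (T1 + T2 + 1) s2"
  unfolding runs_def using exec.Seq by (meson add_le_mono le_refl)

lemma runs_If:
  "runs c1 s T1 s1 \<Longrightarrow> runs c2 s T2 s2 \<Longrightarrow>
   runs (If b c1 c2) s (max T1 T2 + 1) (if bval b s then s1 else s2)"
  unfolding runs_def by (cases "bval b s") (fastforce intro: exec.IfTrue exec.IfFalse)+

lemma runs_mono: "runs c s T s' \<Longrightarrow> T \<le> T' \<Longrightarrow> runs c s T' s'"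
  unfolding runs_def by (meson order_trans)

text \<open>Lets a symbolic execution leave the final state to be identified by a later equation.\<close>

lemma runs_state_eq: "runs c s T s1 \<Longrightarrow> s1 = s2 \<Longrightarrow> runs c s T s2"
  by simp

lemma runs_While_from:
  assumes b: "\<And>j. j < K \<Longrightarrow> bval b (f j)" and nb: "\<not> bval b (f K)"
    and c: "\<And>j. j < K \<Longrightarrow> runs c (f j) T (f (Suc j))"
  shows "i \<le> K \<Longrightarrow> runs (While b c) (f i) ((K - i) * (T + 2) + 1) (f K)"
proof (induction "K - i" arbitrary: i)
  case 0
  then have "i = K" by simp
  then show ?case using nb exec.WhileFalse unfolding runs_def by fastforce
next
  case (Suc d)
  then have i: "i < K" "K - Suc i = d" by auto
  then have IH: "runs (While b c) (f (Suc i)) (d * (T + 2) + 1) (f K)" using Suc.hyps(1)[of "Suc i"] by simp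
  obtain t1 where t1: "exec c (f i) t1 (f (Suc i))" "t1 \<le> T" using c[OF i(1)] unfolding runs_def by auto
  obtain t2 where t2: "exec (While b c) (f (Suc i)) t2 (f K)" "t2 \<le> d * (T + 2) + 1"
    using IH unfolding runs_def by auto
  have "exec (While b c) (f i) (t1 + t2 + 1) (f K)" using b[OF i(1)] t1(1) t2(1) exec.WhileTrue by blast
  moreover have "t1 + t2 + 1 \<le> (K - i) * (T + 2) + 1"
  proof -
    have "K - i = Suc d" using Suc(2) by simp
    then show ?thesis using t1(2) t2(2) by simp
  qed
  ultimately show ?case unfolding runs_def by blast
qed

lemma runs_While:
  assumes "\<And>j. j < K \<Longrightarrow> bval b (f j)" and "\<not> bval b (f K)"
    and "\<And>j. j < K \<Longrightarrow> runs c (f j) T (f (Suc j))"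
  shows "runs (While b c) (f 0) (K * (T + 2) + 1) (f K)"
  using runs_While_from[OF assms, of 0] by simp

definition poly_bounded :: "(nat \<Rightarrow> nat) \<Rightarrow> bool" where
  "poly_bounded f \<longleftrightarrow> (\<exists>c. \<forall>n. f n \<le> c * (n + 1) ^ c)"

lemma le_poly_bound:
  assumes "m \<le> a * (n + 1) ^ e" "a \<le> c" "e \<le> c"
  shows "m \<le> c * (n + 1) ^ c"
proof -
  have "a * (n + 1) ^ e \<le> c * (n + 1) ^ c"
    using assms(2,3) by (intro mult_mono power_increasing) auto
  with assms(1) show ?thesis
    by linarith
qed

lemma poly_bounded_const: "poly_bounded (\<lambda>n. k)"
  unfolding poly_bounded_def by (intro exI[of _ k] allI) simp

lemma poly_bounded_id: "poly_bounded (\<lambda>n. n)"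
  unfolding poly_bounded_def by (intro exI[of _ 1]) simp

lemma poly_bounded_add:
  assumes "poly_bounded f" "poly_bounded g"
  shows "poly_bounded (\<lambda>n. f n + g n)"
proof -
  obtain a b where a: "\<And>n. f n \<le> a * (n + 1) ^ a" and b: "\<And>n. g n \<le> b * (n + 1) ^ b"
    using assms unfolding poly_bounded_def by blast
  have "f n + g n \<le> (a + b) * (n + 1) ^ (a + b)" for n
  proof -
    have "f n \<le> a * (n + 1) ^ (a + b)"
      by (rule order_trans[OF a]) (intro mult_le_mono2 power_increasing; simp)
    moreover have "g n \<le> b * (n + 1) ^ (a + b)"
      by (rule order_trans[OF b]) (intro mult_le_mono2 power_increasing; simp)
    ultimately show ?thesis
      by (simp add: distrib_right)
  qed
  then show ?thesis
    unfolding poly_bounded_def by blast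
qed

lemma poly_bounded_mult:
  assumes "poly_bounded f" "poly_bounded g"
  shows "poly_bounded (\<lambda>n. f n * g n)"
proof -
  obtain a b where a: "\<And>n. f n \<le> a * (n + 1) ^ a" and b: "\<And>n. g n \<le> b * (n + 1) ^ b"
    using assms unfolding poly_bounded_def by blast
  have "f n * g n \<le> (a * b) * (n + 1) ^ (a + b)" for n
    using mult_le_mono[OF a b] by (simp add: power_add mult_ac)
  then have "f n * g n \<le> (a * b + a + b) * (n + 1) ^ (a * b + a + b)" for n
    by (rule le_poly_bound) simp_all
  then show ?thesis
    unfolding poly_bounded_def by blast
qed

lemma poly_bounded_Suc: "poly_bounded f \<Longrightarrow> poly_bounded (\<lambda>n. Suc (f n))"
  using poly_bounded_add[OF _ poly_bounded_const, of f 1] by simp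

lemmas poly_bounded_intros =
  poly_bounded_const poly_bounded_id poly_bounded_add poly_bounded_mult poly_bounded_Suc

lemma encode_snoc: "encode (v @ [b]) = 2 * encode v + of_bool b"
  by (simp add: encode_def)

lemma encode_Nil: "encode [] = 1" by (simp add: encode_def)

lemma encode_ge1: "1 \<le> encode v"
  by (induction v rule: rev_induct) (auto simp: encode_snoc encode_Nil)

lemma encode_gt1: "1 < encode v \<longleftrightarrow> v \<noteq> []"
proof (cases v rule: rev_cases)
  case Nil then show ?thesis by (simp add: encode_Nil)
next
  case (snoc ys y) then show ?thesis using encode_ge1[of ys] by (simp add: encode_snoc)
qed

lemma encode_div: "i \<le> length x \<Longrightarrow> encode x div 2 ^ i = encode (take (length x - i) x)"
proof (induction i)
  case 0 then show ?case by simp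
next
  case (Suc i)
  let ?k = "length x - Suc i"
  have k: "?k < length x" "length x - i = Suc ?k" using Suc by auto
  have "encode x div 2 ^ Suc i = encode x div 2 ^ i div 2" by (simp only: power_Suc2 div_mult2_eq)
  also have "\<dots> = encode (take (Suc ?k) x) div 2" using Suc k by simp
  also have "take (Suc ?k) x = take ?k x @ [x ! ?k]" using k by (simp add: take_Suc_conv_app_nth)
  also have "encode (take ?k x @ [x ! ?k]) div 2 = encode (take ?k x)" by (simp add: encode_snoc)
  finally show ?case .
qed

lemma encode_bit:
  assumes j: "j < length x"
  shows "encode x div 2 ^ (length x - Suc j) mod 2 = of_bool (x ! j)"
proof -
  have "encode x div 2 ^ (length x - Suc j) = encode (take (Suc j) x)"
    using j by (simp add: encode_div)
  also have "take (Suc j) x = take j x @ [x ! j]" using j by (simp add: take_Suc_conv_app_nth)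
  finally show ?thesis by (simp add: encode_snoc)
qed


section \<open>A program computing the size of G_x\<close>

text \<open>Register usage: 0 input, 1 output, 2 n = length x, 3 field width n + 1,
  4 running total, 5 q, 6 packed vector of walk counts, 7 m, 8 packed successor vector,
  9 automaton state p, 10 its count, 11 letter c, 12 and 13 transition results, 14 j;
  registers 15 to 28 are scratch space of the subprograms.\<close>

definition holds_input :: "bool list \<Rightarrow> state \<Rightarrow> bool" where
  "holds_input x s \<longleftrightarrow> s 0 = encode x \<and> s 2 = length x"

definition holds_input_width :: "bool list \<Rightarrow> state \<Rightarrow> bool" where
  "holds_input_width x s \<longleftrightarrow> holds_input x s \<and> s 3 = Suc (length x)"

abbreviation scratch_clear :: "state \<Rightarrow> bool" where
  "scratch_clear s \<equiv> s 15 = 0 \<and> s 16 = 0 \<and> s 17 = 0 \<and> s 18 = 0 \<and> s 19 = 0 \<and> s 20 = 0 \<and>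
     s 21 = 0 \<and> s 22 = 0 \<and> s 23 = 0"

abbreviation temps_clear :: "state \<Rightarrow> bool" where
  "temps_clear s \<equiv> \<forall>r\<in>{12, 13, 14, 15, 16, 17, 18, 19, 20, 21, 22, 23, 24, 25, 27, 28}. s r = 0"

definition drop_bits_loop :: com where
  "drop_bits_loop = While (Less (N 0) (V 20)) (19 ::= Half (V 19) ;; 20 ::= Minus (V 20) (N 1))"

lemma drop_bits_loop_runs: "runs drop_bits_loop s ((s 20) * 5 + 1) (s(19 := s 19 div 2 ^ s 20, 20 := 0))"
proof -
  define K where "K = s 20"
  define f where "f i = s(19 := s 19 div 2 ^ i, 20 := K - i)" for i
  have "runs drop_bits_loop (f 0) (K * (3 + 2) + 1) (f K)"
    unfolding drop_bits_loop_def
  proof (rule runs_While)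
    fix j assume "j < K"
    then show "bval (Less (N 0) (V 20)) (f j)" by (simp add: f_def)
  next
    show "\<not> bval (Less (N 0) (V 20)) (f K)" by (simp add: f_def)
  next
    fix j assume "j < K"
    show "runs (19 ::= Half (V 19) ;; 20 ::= Minus (V 20) (N 1)) (f j) 3 (f (Suc j))"
      apply (rule runs_mono, rule runs_state_eq, rule runs_Seq, rule runs_Assign, rule runs_Assign)
        apply (simp add: f_def fun_eq_iff power_Suc2 div_mult2_eq div_div_commute)
       apply simp
      done
  qed
  moreover have "f 0 = s" by (simp add: f_def K_def fun_eq_iff)
  moreover have "f K = s(19 := s 19 div 2 ^ s 20, 20 := 0)" by (simp add: f_def K_def)
  ultimately show ?thesis by (simp add: K_def)
qed

definition read_bit :: com where
  "read_bit = (19 ::= V 0 ;; 20 ::= Minus (Minus (V 2) (N 1)) (V 21) ;; drop_bits_loop ;;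
     18 ::= Par (V 19) ;; 19 ::= N 0 ;; 20 ::= N 0)"

definition time_read_bit :: "nat \<Rightarrow> nat" where
  "time_read_bit n = 5 * n + 20"

lemma read_bit_runs:
  assumes "holds_input x s" "s 21 < length x"
  shows "runs read_bit s (time_read_bit (length x)) (s(18 := of_bool (x ! s 21), 19 := 0, 20 := 0))"
  unfolding read_bit_def time_read_bit_def
  apply (insert assms)
  apply (rule runs_mono, rule runs_state_eq)
    apply (rule runs_Seq, rule runs_Assign)+
    apply (rule runs_Seq, rule drop_bits_loop_runs)
    apply (rule runs_Seq, rule runs_Assign)+
    apply (rule runs_Assign)
   apply (simp add: fun_eq_iff holds_input_def)
   apply (simp add: encode_bit)
  apply (simp add: holds_input_def)
  done


definition self_match_body :: com where
  "self_match_body = (21 ::= Plus (V 22) (V 16) ;; read_bit ;; 17 ::= V 18 ;; 21 ::= V 16 ;; read_bit ;;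
    If (Eq (V 17) (V 18)) Skip (15 ::= N 0) ;;
    17 ::= N 0 ;; 18 ::= N 0 ;; 21 ::= N 0 ;; 16 ::= Plus (V 16) (N 1))"

lemma self_match_body_runs:
  assumes "holds_input x s" "s 22 + s 23 \<le> length x" "j < s 23"
    "s 17 = 0" "s 18 = 0" "s 19 = 0" "s 20 = 0" "s 21 = 0"
  shows "runs self_match_body (s(15 := of_bool (self_match x (s 22) j), 16 := j))
    (2 * time_read_bit (length x) + 40) (s(15 := of_bool (self_match x (s 22) (Suc j)), 16 := Suc j))"
  unfolding self_match_body_def
  apply (insert assms)
  apply (rule runs_mono, rule runs_state_eq)
    apply (rule runs_Seq, rule runs_Assign)
    apply (rule runs_Seq, rule read_bit_runs, simp add: holds_input_def, simp)
    apply (rule runs_Seq, rule runs_Assign)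
    apply (rule runs_Seq, rule runs_Assign)
    apply (rule runs_Seq, rule read_bit_runs, simp add: holds_input_def, simp)
    apply (rule runs_Seq, rule runs_If, rule runs_Skip, rule runs_Assign)
    apply (rule runs_Seq, rule runs_Assign)+
    apply (rule runs_Assign)
   apply (simp add: fun_eq_iff self_match_Suc, blast)
  apply simp
  done

lemma self_match_loop_runs:
  assumes a: "holds_input x s" "s 22 + s 23 \<le> length x" "s 15 = 1" "s 16 = 0"
    "s 17 = 0" "s 18 = 0" "s 19 = 0" "s 20 = 0" "s 21 = 0"
  shows "runs (While (Less (V 16) (V 23)) self_match_body) s
    (s 23 * (2 * time_read_bit (length x) + 40 + 2) + 1) (s(15 := of_bool (self_match x (s 22) (s 23)), 16 := s 23))"
proof -
  define f where "f j = s(15 := of_bool (self_match x (s 22) j), 16 := j)" for j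
  have "runs (While (Less (V 16) (V 23)) self_match_body) (f 0)
      (s 23 * (2 * time_read_bit (length x) + 40 + 2) + 1) (f (s 23))"
  proof (rule runs_While)
    fix j assume "j < s 23"
    then show "bval (Less (V 16) (V 23)) (f j)" by (simp add: f_def)
  next
    show "\<not> bval (Less (V 16) (V 23)) (f (s 23))" by (simp add: f_def)
  next
    fix j assume "j < s 23"
    then show "runs self_match_body (f j) (2 * time_read_bit (length x) + 40) (f (Suc j))"
      unfolding f_def using self_match_body_runs a by blast
  qed
  moreover have "f 0 = s" using a by (simp add: f_def fun_eq_iff self_match_def)
  ultimately show ?thesis by (simp add: f_def)
qed

definition self_match_prog :: com where
  "self_match_prog = (16 ::= N 0 ;; 17 ::= N 0 ;; 18 ::= N 0 ;; 19 ::= N 0 ;; 20 ::= N 0 ;; 21 ::= N 0 ;; 15 ::= N 1 ;;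
     While (Less (V 16) (V 23)) self_match_body ;; 16 ::= N 0)"

definition time_self_match :: "nat \<Rightarrow> nat" where
  "time_self_match n = n * (2 * time_read_bit n + 42) + 20"

lemma self_match_prog_runs:
  assumes a: "holds_input x s" "s 22 + s 23 \<le> length x"
  shows "runs self_match_prog s (time_self_match (length x))
    (s(15 := of_bool (self_match x (s 22) (s 23)), 16 := 0, 17 := 0, 18 := 0, 19 := 0, 20 := 0, 21 := 0))"
  unfolding self_match_prog_def
  apply (rule runs_mono, rule runs_state_eq)
    apply (rule runs_Seq, rule runs_Assign)+
    apply (rule runs_Seq, rule self_match_loop_runs)
  using a apply (simp_all add: holds_input_def)[9]
    apply (rule runs_Assign)
   apply (simp add: fun_eq_iff)
  apply (simp add: time_self_match_def)
  apply (rule le_trans[OF mult_le_mono1[of "s 23" "length x"]])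
  using a apply (simp_all add: algebra_simps)
  done


definition step_search_body :: com where
  "step_search_body = (22 ::= Minus (V 9) (V 14) ;; 23 ::= V 14 ;; self_match_prog ;; 21 ::= V 14 ;; read_bit ;;
    If (And (Less (N 0) (V 15)) (Eq (V 18) (V 11))) (12 ::= Plus (V 14) (N 1)) Skip ;;
    15 ::= N 0 ;; 18 ::= N 0 ;; 21 ::= N 0 ;; 22 ::= N 0 ;; 23 ::= N 0 ;; 14 ::= Plus (V 14) (N 1))"

definition dies_search_body :: com where
  "dies_search_body = (22 ::= Minus (V 9) (V 14) ;; 23 ::= V 14 ;; self_match_prog ;; 21 ::= V 14 ;; read_bit ;;
    If (And (Less (N 0) (V 15)) (Less (N 0) (V 18))) (13 ::= N 1) Skip ;;
    15 ::= N 0 ;; 18 ::= N 0 ;; 21 ::= N 0 ;; 22 ::= N 0 ;; 23 ::= N 0 ;; 14 ::= Plus (V 14) (N 1))"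

lemma step_search_body_runs:
  assumes "s 11 = of_bool c" "holds_input x s" "s 9 \<le> length x" "j < min (length x) (Suc (s 9))" "scratch_clear s"
  shows "runs step_search_body (s(12 := step_search x (s 9) c j, 14 := j))
    (time_self_match (length x) + time_read_bit (length x) + 30)
    (s(12 := step_search x (s 9) c (Suc j), 14 := Suc j))"
  unfolding step_search_body_def
  apply (insert assms)
  apply (rule runs_mono, rule runs_state_eq)
    apply (rule runs_Seq, rule runs_Assign)+
    apply (rule runs_Seq, rule self_match_prog_runs, simp add: holds_input_def, simp)
    apply (rule runs_Seq, rule runs_Assign)
    apply (rule runs_Seq, rule read_bit_runs, simp add: holds_input_def, simp)
    apply (rule runs_Seq, rule runs_If, rule runs_Assign, rule runs_Skip)
    apply (rule runs_Seq, rule runs_Assign)+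
    apply (rule runs_Assign)
   apply (auto simp: fun_eq_iff)[1]
  apply simp
  done

lemma dies_search_body_runs:
  assumes "holds_input x s" "s 9 \<le> length x" "j < min (length x) (Suc (s 9))" "scratch_clear s"
  shows "runs dies_search_body (s(13 := of_bool (dies_search x (s 9) j), 14 := j))
    (time_self_match (length x) + time_read_bit (length x) + 30)
    (s(13 := of_bool (dies_search x (s 9) (Suc j)), 14 := Suc j))"
  unfolding dies_search_body_def
  apply (insert assms)
  apply (rule runs_mono, rule runs_state_eq)
    apply (rule runs_Seq, rule runs_Assign)+
    apply (rule runs_Seq, rule self_match_prog_runs, simp add: holds_input_def, simp)
    apply (rule runs_Seq, rule runs_Assign)
    apply (rule runs_Seq, rule read_bit_runs, simp add: holds_input_def, simp)
    apply (rule runs_Seq, rule runs_If, rule runs_Assign, rule runs_Skip)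
    apply (rule runs_Seq, rule runs_Assign)+
    apply (rule runs_Assign)
   apply (simp add: fun_eq_iff)
  apply simp
  done


definition step_search_loop :: com where
  "step_search_loop = While (And (Less (V 14) (V 2)) (Less (V 14) (Plus (V 9) (N 1)))) step_search_body"
definition dies_search_loop :: com where
  "dies_search_loop = While (And (Less (V 14) (V 2)) (Less (V 14) (Plus (V 9) (N 1)))) dies_search_body"

lemma step_search_loop_runs:
  assumes a: "holds_input x s" "s 9 \<le> length x" "scratch_clear s" "s 12 = 0" "s 14 = 0" and c: "s 11 = of_bool c"
  shows "runs step_search_loop s (min (length x) (Suc (s 9)) * (time_self_match (length x) + time_read_bit (length x) + 30 + 2) + 1)
    (s(12 := step_search x (s 9) c (min (length x) (Suc (s 9))), 14 := min (length x) (Suc (s 9))))"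
proof -
  define K where "K = min (length x) (Suc (s 9))"
  define f where "f j = s(12 := step_search x (s 9) c j, 14 := j)" for j
  have "runs step_search_loop (f 0) (K * (time_self_match (length x) + time_read_bit (length x) + 30 + 2) + 1) (f K)"
    unfolding step_search_loop_def
  proof (rule runs_While)
    fix j assume "j < K"
    then show "bval (And (Less (V 14) (V 2)) (Less (V 14) (Plus (V 9) (N 1)))) (f j)"
      using a by (simp add: f_def K_def holds_input_def)
  next
    show "\<not> bval (And (Less (V 14) (V 2)) (Less (V 14) (Plus (V 9) (N 1)))) (f K)"
      using a by (auto simp add: f_def K_def holds_input_def)
  next
    fix j assume "j < K"
    then show "runs step_search_body (f j) (time_self_match (length x) + time_read_bit (length x) + 30) (f (Suc j))"
      unfolding f_def K_def using step_search_body_runs a c by blast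
  qed
  moreover have "f 0 = s" using a by (simp add: f_def fun_eq_iff)
  ultimately show ?thesis by (simp add: f_def K_def)
qed

lemma dies_search_loop_runs:
  assumes a: "holds_input x s" "s 9 \<le> length x" "scratch_clear s" "s 13 = 0" "s 14 = 0"
  shows "runs dies_search_loop s (min (length x) (Suc (s 9)) * (time_self_match (length x) + time_read_bit (length x) + 30 + 2) + 1)
    (s(13 := of_bool (dies_search x (s 9) (min (length x) (Suc (s 9)))), 14 := min (length x) (Suc (s 9))))"
proof -
  define K where "K = min (length x) (Suc (s 9))"
  define f where "f j = s(13 := of_bool (dies_search x (s 9) j), 14 := j)" for j
  have "runs dies_search_loop (f 0) (K * (time_self_match (length x) + time_read_bit (length x) + 30 + 2) + 1) (f K)"
    unfolding dies_search_loop_def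
  proof (rule runs_While)
    fix j assume "j < K"
    then show "bval (And (Less (V 14) (V 2)) (Less (V 14) (Plus (V 9) (N 1)))) (f j)"
      using a by (simp add: f_def K_def holds_input_def)
  next
    show "\<not> bval (And (Less (V 14) (V 2)) (Less (V 14) (Plus (V 9) (N 1)))) (f K)"
      using a by (auto simp add: f_def K_def holds_input_def)
  next
    fix j assume "j < K"
    then show "runs dies_search_body (f j) (time_self_match (length x) + time_read_bit (length x) + 30) (f (Suc j))"
      unfolding f_def K_def using dies_search_body_runs a by blast
  qed
  moreover have "f 0 = s" using a by (simp add: f_def fun_eq_iff)
  ultimately show ?thesis by (simp add: f_def K_def)
qed

definition time_kmp :: "nat \<Rightarrow> nat" where
  "time_kmp n = n * (time_self_match n + time_read_bit n + 32) + 40"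

definition kmp_step_prog :: com where
  "kmp_step_prog = (14 ::= N 0 ;; 15 ::= N 0 ;; 16 ::= N 0 ;; 17 ::= N 0 ;; 18 ::= N 0 ;; 19 ::= N 0 ;;
    20 ::= N 0 ;; 21 ::= N 0 ;; 22 ::= N 0 ;; 23 ::= N 0 ;; 12 ::= N 0 ;; step_search_loop ;; 14 ::= N 0)"

definition kmp_dies_prog :: com where
  "kmp_dies_prog = (14 ::= N 0 ;; 15 ::= N 0 ;; 16 ::= N 0 ;; 17 ::= N 0 ;; 18 ::= N 0 ;; 19 ::= N 0 ;;
    20 ::= N 0 ;; 21 ::= N 0 ;; 22 ::= N 0 ;; 23 ::= N 0 ;; 13 ::= N 0 ;;
    If (Less (N 0) (V 11)) Skip dies_search_loop ;; 14 ::= N 0)"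

lemma kmp_step_prog_runs:
  assumes c: "s 11 = of_bool c" and a: "holds_input x s" "s 9 \<le> length x"
  shows "runs kmp_step_prog s (time_kmp (length x)) (s(12 := kmp_step x (s 9) c, 14 := 0, 15 := 0, 16 := 0, 17 := 0, 18 := 0,
     19 := 0, 20 := 0, 21 := 0, 22 := 0, 23 := 0))"
proof -
  show ?thesis
  unfolding kmp_step_prog_def
  apply (rule runs_mono, rule runs_state_eq)
    apply (rule runs_Seq, rule runs_Assign)+
    apply (rule runs_Seq, rule step_search_loop_runs)
  using c a apply (simp_all add: holds_input_def)[6]
    apply (rule runs_Assign)
   apply (simp add: fun_eq_iff kmp_step_def)
  apply (simp add: time_kmp_def)
  apply (rule le_trans[OF mult_le_mono1[OF min.cobounded1[of "length x"]]])
  apply (simp add: algebra_simps)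
  done
qed

lemma kmp_dies_prog_runs:
  assumes c: "s 11 = of_bool c" and a: "holds_input x s" "s 9 \<le> length x"
  shows "runs kmp_dies_prog s (time_kmp (length x)) (s(13 := of_bool (kmp_dies x (s 9) c), 14 := 0, 15 := 0, 16 := 0, 17 := 0, 18 := 0,
     19 := 0, 20 := 0, 21 := 0, 22 := 0, 23 := 0))"
proof -
  show ?thesis
  unfolding kmp_dies_prog_def
  apply (rule runs_mono, rule runs_state_eq)
    apply (rule runs_Seq, rule runs_Assign)+
    apply (rule runs_Seq, rule runs_If, rule runs_Skip, rule dies_search_loop_runs)
  using a apply (simp_all add: holds_input_def)[5]
    apply (rule runs_Assign)
   using c apply (auto simp add: fun_eq_iff kmp_dies_def)[1]
  apply (simp add: time_kmp_def)
  apply (rule le_trans[OF mult_le_mono1[OF min.cobounded1[of "length x"]]])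
  apply (simp add: algebra_simps)
  done
qed


definition shl_field :: com where
  "shl_field = (25 ::= N 0 ;;
     While (Less (V 25) (V 3)) (24 ::= Plus (V 24) (V 24) ;; 25 ::= Plus (V 25) (N 1)) ;; 25 ::= N 0)"
definition shr_field :: com where
  "shr_field = (25 ::= N 0 ;;
     While (Less (V 25) (V 3)) (24 ::= Half (V 24) ;; 25 ::= Plus (V 25) (N 1)) ;; 25 ::= N 0)"

lemma shl_field_runs: "runs shl_field s (s 3 * 5 + 10) (s(24 := s 24 * 2 ^ s 3, 25 := 0))"
proof -
  define f where "f j = s(24 := s 24 * 2 ^ j, 25 := j)" for j
  have L: "runs (While (Less (V 25) (V 3)) (24 ::= Plus (V 24) (V 24) ;; 25 ::= Plus (V 25) (N 1)))
      (f 0) (s 3 * (3 + 2) + 1) (f (s 3))"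
  proof (rule runs_While)
    fix j assume "j < s 3"
    then show "bval (Less (V 25) (V 3)) (f j)" by (simp add: f_def)
  next
    show "\<not> bval (Less (V 25) (V 3)) (f (s 3))" by (simp add: f_def)
  next
    fix j
    show "runs (24 ::= Plus (V 24) (V 24) ;; 25 ::= Plus (V 25) (N 1)) (f j) 3 (f (Suc j))"
      apply (rule runs_mono, rule runs_state_eq, rule runs_Seq, rule runs_Assign, rule runs_Assign)
       apply (simp add: f_def fun_eq_iff)
      apply simp
      done
  qed
  have f0: "f 0 = s(25 := 0)" by (simp add: f_def fun_eq_iff)
  show ?thesis
    unfolding shl_field_def
    apply (rule runs_mono, rule runs_state_eq)
      apply (rule runs_Seq, rule runs_Assign)
      apply (rule runs_Seq)
       apply (simp only: aval.simps f0[symmetric], rule L)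
      apply (rule runs_Assign)
     apply (simp add: f_def fun_eq_iff)
    apply simp
    done
qed

lemma shr_field_runs: "runs shr_field s (s 3 * 5 + 10) (s(24 := s 24 div 2 ^ s 3, 25 := 0))"
proof -
  define f where "f j = s(24 := s 24 div 2 ^ j, 25 := j)" for j
  have L: "runs (While (Less (V 25) (V 3)) (24 ::= Half (V 24) ;; 25 ::= Plus (V 25) (N 1)))
      (f 0) (s 3 * (3 + 2) + 1) (f (s 3))"
  proof (rule runs_While)
    fix j assume "j < s 3"
    then show "bval (Less (V 25) (V 3)) (f j)" by (simp add: f_def)
  next
    show "\<not> bval (Less (V 25) (V 3)) (f (s 3))" by (simp add: f_def)
  next
    fix j
    show "runs (24 ::= Half (V 24) ;; 25 ::= Plus (V 25) (N 1)) (f j) 3 (f (Suc j))"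
      apply (rule runs_mono, rule runs_state_eq, rule runs_Seq, rule runs_Assign, rule runs_Assign)
       apply (simp add: f_def fun_eq_iff power_Suc2 div_mult2_eq div_div_commute)
      apply simp
      done
  qed
  have f0: "f 0 = s(25 := 0)" by (simp add: f_def fun_eq_iff)
  show ?thesis
    unfolding shr_field_def
    apply (rule runs_mono, rule runs_state_eq)
      apply (rule runs_Seq, rule runs_Assign)
      apply (rule runs_Seq)
       apply (simp only: aval.simps f0[symmetric], rule L)
      apply (rule runs_Assign)
     apply (simp add: f_def fun_eq_iff)
    apply simp
    done
qed

definition shl_fields :: com where
  "shl_fields = (27 ::= N 0 ;; 25 ::= N 0 ;;
     While (Less (V 27) (V 28)) (shl_field ;; 27 ::= Plus (V 27) (N 1)) ;; 27 ::= N 0)"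
definition shr_fields :: com where
  "shr_fields = (27 ::= N 0 ;; 25 ::= N 0 ;;
     While (Less (V 27) (V 28)) (shr_field ;; 27 ::= Plus (V 27) (N 1)) ;; 27 ::= N 0)"

lemma shl_fields_runs:
  "runs shl_fields s (s 28 * (s 3 * 5 + 14) + 10) (s(24 := s 24 * 2 ^ (s 3 * s 28), 25 := 0, 27 := 0))"
proof -
  define f where "f j = s(24 := s 24 * 2 ^ (s 3 * j), 25 := 0, 27 := j)" for j
  have L: "runs (While (Less (V 27) (V 28)) (shl_field ;; 27 ::= Plus (V 27) (N 1))) (f 0)
      (s 28 * ((s 3 * 5 + 10 + 1 + 1) + 2) + 1) (f (s 28))"
  proof (rule runs_While)
    fix j assume "j < s 28"
    then show "bval (Less (V 27) (V 28)) (f j)" by (simp add: f_def)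
  next
    show "\<not> bval (Less (V 27) (V 28)) (f (s 28))" by (simp add: f_def)
  next
    fix j
    show "runs (shl_field ;; 27 ::= Plus (V 27) (N 1)) (f j) (s 3 * 5 + 10 + 1 + 1) (f (Suc j))"
      apply (rule runs_mono, rule runs_state_eq, rule runs_Seq, rule shl_field_runs, rule runs_Assign)
       apply (simp add: f_def fun_eq_iff power_add)
      apply (simp add: f_def)
      done
  qed
  have f0: "f 0 = s(27 := 0, 25 := 0)" by (simp add: f_def fun_eq_iff)
  show ?thesis
    unfolding shl_fields_def
    apply (rule runs_mono, rule runs_state_eq)
      apply (rule runs_Seq, rule runs_Assign)
      apply (rule runs_Seq, rule runs_Assign)
      apply (rule runs_Seq)
       apply (simp only: aval.simps f0[symmetric], rule L)
      apply (rule runs_Assign)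
     apply (simp add: f_def fun_eq_iff)
    apply (simp add: algebra_simps)
    done
qed

lemma shr_fields_runs:
  "runs shr_fields s (s 28 * (s 3 * 5 + 14) + 10) (s(24 := s 24 div 2 ^ (s 3 * s 28), 25 := 0, 27 := 0))"
proof -
  define f where "f j = s(24 := s 24 div 2 ^ (s 3 * j), 25 := 0, 27 := j)" for j
  have L: "runs (While (Less (V 27) (V 28)) (shr_field ;; 27 ::= Plus (V 27) (N 1))) (f 0)
      (s 28 * ((s 3 * 5 + 10 + 1 + 1) + 2) + 1) (f (s 28))"
  proof (rule runs_While)
    fix j assume "j < s 28"
    then show "bval (Less (V 27) (V 28)) (f j)" by (simp add: f_def)
  next
    show "\<not> bval (Less (V 27) (V 28)) (f (s 28))" by (simp add: f_def)
  next
    fix j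
    show "runs (shr_field ;; 27 ::= Plus (V 27) (N 1)) (f j) (s 3 * 5 + 10 + 1 + 1) (f (Suc j))"
      apply (rule runs_mono, rule runs_state_eq, rule runs_Seq, rule shr_field_runs, rule runs_Assign)
       apply (simp add: f_def fun_eq_iff power_add div_mult2_eq div_div_commute)
      apply (simp add: f_def)
      done
  qed
  have f0: "f 0 = s(27 := 0, 25 := 0)" by (simp add: f_def fun_eq_iff)
  show ?thesis
    unfolding shr_fields_def
    apply (rule runs_mono, rule runs_state_eq)
      apply (rule runs_Seq, rule runs_Assign)
      apply (rule runs_Seq, rule runs_Assign)
      apply (rule runs_Seq)
       apply (simp only: aval.simps f0[symmetric], rule L)
      apply (rule runs_Assign)
     apply (simp add: f_def fun_eq_iff)
    apply (simp add: algebra_simps)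
    done
qed

definition add_transition :: com where
  "add_transition = (kmp_step_prog ;; kmp_dies_prog ;;
     If (Less (N 0) (V 13)) Skip (24 ::= V 10 ;; 28 ::= V 12 ;; shl_fields ;; 8 ::= Plus (V 8) (V 24)) ;;
     12 ::= N 0 ;; 13 ::= N 0 ;; 24 ::= N 0 ;; 28 ::= N 0)"

definition time_add_transition :: "nat \<Rightarrow> nat" where
  "time_add_transition n = 2 * time_kmp n + n * (5 * n + 19) + 40"

lemma add_transition_runs:
  assumes c: "s 11 = of_bool c" and a: "holds_input_width x s" "s 9 \<le> length x" "temps_clear s"
  shows "runs add_transition s (time_add_transition (length x))
   (s(8 := s 8 + (if kmp_dies x (s 9) c then 0 else s 10 * 2 ^ (Suc (length x) * kmp_step x (s 9) c))))"
proof -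
  have d: "kmp_step x (s 9) c * (Suc (length x) * 5 + 14) \<le> length x * (Suc (length x) * 5 + 14)"
    using kmp_step_le by (intro mult_le_mono1) auto
  show ?thesis
  unfolding add_transition_def
  apply (rule runs_mono, rule runs_state_eq)
    apply (rule runs_Seq, rule kmp_step_prog_runs)
  using c a apply (simp_all add: holds_input_def holds_input_width_def)[3]
    apply (rule runs_Seq, rule kmp_dies_prog_runs)
  using c a apply (simp_all add: holds_input_def holds_input_width_def)[3]
    apply (rule runs_Seq, rule runs_If, rule runs_Skip)
     apply (rule runs_Seq, rule runs_Assign)+
     apply (rule runs_Seq, rule shl_fields_runs, rule runs_Assign)
    apply (rule runs_Seq, rule runs_Assign)+
    apply (rule runs_Assign)
  using c a apply (simp add: fun_eq_iff holds_input_width_def)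
  using a d apply (simp add: holds_input_width_def time_add_transition_def algebra_simps)
  done
qed

definition transition_body :: com where
  "transition_body = (24 ::= V 6 ;; shr_field ;; 26 ::= V 24 ;; shl_field ;; 10 ::= Minus (V 6) (V 24) ;; 6 ::= V 26 ;;
     24 ::= N 0 ;; 26 ::= N 0 ;; 11 ::= N 0 ;; add_transition ;; 11 ::= N 1 ;; add_transition ;; 10 ::= N 0 ;; 11 ::= N 0 ;;
     9 ::= Plus (V 9) (N 1))"

definition time_transition_body :: "nat \<Rightarrow> nat" where
  "time_transition_body n = 2 * time_add_transition n + 10 * n + 60"

lemma transition_body_runs:
  assumes a: "holds_input_width x s" "temps_clear s" "s 10 = 0" "s 11 = 0" "s 26 = 0"
    "\<And>i. a i < 2 ^ Suc (length x)" "p \<le> length x"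
  shows "runs transition_body (s(6 := pack (Suc (length x)) (\<lambda>i. a (p + i)) (Suc (length x) - p), 8 := ac, 9 := p))
    (time_transition_body (length x))
    (s(6 := pack (Suc (length x)) (\<lambda>i. a (Suc p + i)) (Suc (length x) - Suc p), 8 := ac + state_contrib x a p, 9 := Suc p))"
proof -
  let ?W = "Suc (length x)"
  let ?V = "pack ?W (\<lambda>i. a (p + i)) (Suc (length x) - p)"
  have e: "Suc (length x) - p = Suc (length x - p)" "Suc (length x) - Suc p = length x - p" using a(7) by auto
  have vd: "?V div 2 ^ ?W = pack ?W (\<lambda>i. a (Suc p + i)) (Suc (length x) - Suc p)"
    unfolding e using pack_div[of "\<lambda>i. a (p + i)" ?W "length x - p", OF a(6)[of "p+0"]] by simp
  have vm: "?V - ?V div 2 ^ ?W * 2 ^ ?W = a p"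
    unfolding minus_div_mult_eq_mod unfolding e using pack_mod[of "\<lambda>i. a (p + i)" ?W "length x - p", OF a(6)[of "p+0"]] by simp
  have vm2: "?V - pack ?W (\<lambda>i. a (Suc p + i)) (Suc (length x) - Suc p) * 2 ^ ?W = a p"
    using vm vd by simp
  have s3: "s 3 = ?W" using a(1) by (simp add: holds_input_width_def)
  show ?thesis
  unfolding transition_body_def
  apply (rule runs_mono, rule runs_state_eq)
    apply (rule runs_Seq, rule runs_Assign_eq, simp)
    apply (rule runs_Seq, rule runs_state_eq, rule shr_field_runs, simp)
    apply (rule runs_Seq, rule runs_Assign_eq, simp)
    apply (rule runs_Seq, rule runs_state_eq, rule shl_field_runs, simp)
    apply (rule runs_Seq, rule runs_Assign_eq, simp)+
    apply (rule runs_Seq, rule runs_state_eq, rule add_transition_runs[where c = False])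
  using a apply (simp_all add: holds_input_width_def holds_input_def)[4]
     apply simp
    apply (rule runs_Seq, rule runs_Assign_eq, simp)
    apply (rule runs_Seq, rule runs_state_eq, rule add_transition_runs[where c = True])
  using a apply (simp_all add: holds_input_width_def holds_input_def)[4]
     apply simp
    apply (rule runs_Seq, rule runs_Assign_eq, simp)+
    apply (rule runs_Assign_eq, simp)
  using a apply (simp add: fun_eq_iff s3 vd[simplified] vm2[simplified] state_contrib_def)
  using a apply (simp add: s3 time_transition_body_def)
  done
qed


definition transition_loop :: com where
  "transition_loop = While (Less (V 9) (Plus (V 2) (N 1))) transition_body"

lemma transition_loop_runs:
  assumes a: "holds_input_width x s" "temps_clear s" "s 10 = 0" "s 11 = 0" "s 26 = 0" "\<And>i. a i < 2 ^ Suc (length x)"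
    "s 9 = 0" "s 8 = 0" "s 6 = pack (Suc (length x)) a (Suc (length x))"
  shows "runs transition_loop s (Suc (length x) * (time_transition_body (length x) + 2) + 1)
    (s(6 := 0, 8 := (\<Sum>p<Suc (length x). state_contrib x a p), 9 := Suc (length x)))"
proof -
  define f where "f p = s(6 := pack (Suc (length x)) (\<lambda>i. a (p + i)) (Suc (length x) - p),
     8 := (\<Sum>p'<p. state_contrib x a p'), 9 := p)" for p
  have "runs transition_loop (f 0) (Suc (length x) * (time_transition_body (length x) + 2) + 1) (f (Suc (length x)))"
    unfolding transition_loop_def
  proof (rule runs_While)
    fix j assume "j < Suc (length x)"
    then show "bval (Less (V 9) (Plus (V 2) (N 1))) (f j)"
      using a(1) by (simp add: f_def holds_input_width_def holds_input_def)
  next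
    show "\<not> bval (Less (V 9) (Plus (V 2) (N 1))) (f (Suc (length x)))"
      using a(1) by (simp add: f_def holds_input_width_def holds_input_def)
  next
    fix j assume j: "j < Suc (length x)"
    have "runs transition_body (s(6 := pack (Suc (length x)) (\<lambda>i. a (j + i)) (Suc (length x) - j), 8 := (\<Sum>p'<j. state_contrib x a p'), 9 := j))
      (time_transition_body (length x)) (s(6 := pack (Suc (length x)) (\<lambda>i. a (Suc j + i)) (Suc (length x) - Suc j),
          8 := (\<Sum>p'<j. state_contrib x a p') + state_contrib x a j, 9 := Suc j))"
      by (rule transition_body_runs) (use a j in auto)
    then show "runs transition_body (f j) (time_transition_body (length x)) (f (Suc j))" by (simp add: f_def)
  qed
  moreover have "f 0 = s" using a by (simp add: f_def fun_eq_iff)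
  moreover have "f (Suc (length x)) = s(6 := 0, 8 := (\<Sum>p<Suc (length x). state_contrib x a p), 9 := Suc (length x))"
    by (simp add: f_def pack_0)
  ultimately show ?thesis by simp
qed

definition walk_step :: com where
  "walk_step = (8 ::= N 0 ;; 9 ::= N 0 ;; transition_loop ;; 6 ::= V 8 ;; 8 ::= N 0 ;; 9 ::= N 0 ;; 7 ::= Plus (V 7) (N 1))"

definition time_walk_step :: "nat \<Rightarrow> nat" where
  "time_walk_step n = Suc n * (time_transition_body n + 2) + 20"

lemma walk_step_runs:
  assumes a: "holds_input_width x s" "temps_clear s" "s 10 = 0" "s 11 = 0" "s 26 = 0" "s 8 = 0" "s 9 = 0"
    "q \<le> length x" "m < length x"
  shows "runs walk_step (s(6 := pack (Suc (length x)) (walks x q m) (Suc (length x)), 7 := m)) (time_walk_step (length x))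
    (s(6 := pack (Suc (length x)) (walks x q (Suc m)) (Suc (length x)), 7 := Suc m))"
proof -
  have b: "\<And>i. walks x q m i < 2 ^ Suc (length x)" using walks_less a by simp
  have "walks x q (Suc m) = (\<lambda>p'. \<Sum>p\<le>length x. transitions x p p' * walks x q m p)"
    by (rule ext) simp
  then have cs: "(\<Sum>p<Suc (length x). state_contrib x (walks x q m) p) =
      pack (Suc (length x)) (walks x q (Suc m)) (Suc (length x))"
    by (simp only: lessThan_Suc_atMost sum_state_contrib)
  show ?thesis
  unfolding walk_step_def
  apply (rule runs_mono, rule runs_state_eq)
    apply (rule runs_Seq, rule runs_Assign_eq, simp)+
    apply (rule runs_Seq, rule runs_state_eq, rule transition_loop_runs[where a = "walks x q m"])
  using a b apply (simp_all add: holds_input_width_def holds_input_def)[9]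
     apply simp
    apply (rule runs_Seq, rule runs_Assign_eq, simp)+
    apply (rule runs_Assign_eq, simp)
  using a apply (simp add: fun_eq_iff cs[simplified])
  apply (simp add: time_walk_step_def)
  done
qed

definition walk_loop :: com where
  "walk_loop = While (Less (V 7) (V 2)) walk_step"

lemma walk_loop_runs:
  assumes a: "holds_input_width x s" "temps_clear s" "s 10 = 0" "s 11 = 0" "s 26 = 0" "s 8 = 0" "s 9 = 0" "q \<le> length x"
    "s 7 = 0" "s 6 = pack (Suc (length x)) (walks x q 0) (Suc (length x))"
  shows "runs walk_loop s (length x * (time_walk_step (length x) + 2) + 1)
    (s(6 := pack (Suc (length x)) (walks x q (length x)) (Suc (length x)), 7 := length x))"
proof -
  define f where "f m = s(6 := pack (Suc (length x)) (walks x q m) (Suc (length x)), 7 := m)" for m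
  have "runs walk_loop (f 0) (length x * (time_walk_step (length x) + 2) + 1) (f (length x))"
    unfolding walk_loop_def
  proof (rule runs_While)
    fix j assume "j < length x"
    then show "bval (Less (V 7) (V 2)) (f j)" using a(1) by (simp add: f_def holds_input_width_def holds_input_def)
  next
    show "\<not> bval (Less (V 7) (V 2)) (f (length x))"
      using a(1) by (simp add: f_def holds_input_width_def holds_input_def)
  next
    fix j assume j: "j < length x"
    show "runs walk_step (f j) (time_walk_step (length x)) (f (Suc j))"
      unfolding f_def by (rule walk_step_runs) (use a j in auto)
  qed
  moreover have "f 0 = s" using a by (simp add: f_def fun_eq_iff)
  ultimately show ?thesis by (simp add: f_def)
qed

definition count_state :: com where
  "count_state = (24 ::= N 1 ;; 28 ::= V 5 ;; shl_fields ;; 6 ::= V 24 ;; 24 ::= N 0 ;; 28 ::= N 0 ;; 7 ::= N 0 ;; walk_loop ;;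
   24 ::= V 6 ;; 28 ::= V 5 ;; shr_fields ;; 26 ::= V 24 ;; shr_field ;; shl_field ;; 4 ::= Plus (V 4) (Minus (V 26) (V 24)) ;;
   6 ::= N 0 ;; 7 ::= N 0 ;; 24 ::= N 0 ;; 26 ::= N 0 ;; 28 ::= N 0 ;; 5 ::= Plus (V 5) (N 1))"

definition time_count_state :: "nat \<Rightarrow> nat" where
  "time_count_state n = n * (time_walk_step n + 2) + 2 * (n * (5 * n + 19)) + 10 * n + 100"

lemma count_state_runs:
  assumes a: "holds_input_width x s" "temps_clear s" "s 6 = 0" "s 7 = 0" "s 8 = 0" "s 9 = 0" "s 10 = 0"
    "s 11 = 0" "s 26 = 0" "q \<le> length x"
  shows "runs count_state (s(4 := B, 5 := q)) (time_count_state (length x))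
    (s(4 := B + walks x q (length x) q, 5 := Suc q))"
proof -
  have s3: "s 3 = Suc (length x)" using a(1) by (simp add: holds_input_width_def)
  have b: "\<And>i. walks x q (length x) i < 2 ^ Suc (length x)" using walks_less a by simp
  let ?P = "pack (Suc (length x)) (walks x q (length x)) (Suc (length x))"
  have "?P div 2 ^ (s 3 * q) mod 2 ^ s 3 = walks x q (length x) q"
    unfolding s3 by (rule pack_nth) (use a b in auto)
  then have field_value: "B + ?P div 2 ^ (s 3 * q) - ?P div 2 ^ (s 3 * q) div 2 ^ s 3 * 2 ^ s 3
      = B + walks x q (length x) q"
    using minus_div_mult_eq_mod[of "?P div 2 ^ (s 3 * q)" "2 ^ s 3"]
      div_times_less_eq_dividend[of "?P div 2 ^ (s 3 * q)" "2 ^ s 3"] by linarith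
  have initial: "2 ^ (q + length x * q) = pack (Suc (length x)) (walks x q 0) (Suc (length x))"
    using pack_walks_0[OF a(10), of "Suc (length x)"] by simp
  have m: "q * (Suc (length x) * 5 + 14) \<le> length x * (Suc (length x) * 5 + 14)"
    using a by (intro mult_le_mono1) simp
  show ?thesis
  unfolding count_state_def
  apply (rule runs_mono, rule runs_state_eq)
    apply (rule runs_Seq, rule runs_Assign_eq, simp)+
    apply (rule runs_Seq, rule runs_state_eq, rule shl_fields_runs, simp)
    apply (rule runs_Seq, rule runs_Assign_eq, simp)+
    apply (rule runs_Seq, rule runs_state_eq, rule walk_loop_runs[where q = q])
  using a s3 apply (simp_all add: holds_input_width_def holds_input_def initial)[10]
     apply (simp | rule refl)
    apply (rule runs_Seq, rule runs_Assign_eq, simp)+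
    apply (rule runs_Seq, rule runs_state_eq, rule shr_fields_runs, simp)
    apply (rule runs_Seq, rule runs_Assign_eq, simp)
    apply (rule runs_Seq, rule runs_state_eq, rule shr_field_runs, simp)
    apply (rule runs_Seq, rule runs_state_eq, rule shl_field_runs, simp)
    apply (rule runs_Seq, rule runs_Assign_eq, simp)+
    apply (rule runs_Assign_eq, simp)
  using a apply (simp add: fun_eq_iff field_value)
  using a m apply (simp add: s3 time_count_state_def algebra_simps)
  done
qed

definition count_loop :: com where
  "count_loop = While (Less (V 5) (Plus (V 2) (N 1))) count_state"

lemma count_loop_runs:
  assumes a: "holds_input_width x s" "temps_clear s" "s 6 = 0" "s 7 = 0" "s 8 = 0" "s 9 = 0" "s 10 = 0" "s 11 = 0" "s 26 = 0"
    "s 4 = 0" "s 5 = 0"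
  shows "runs count_loop s (Suc (length x) * (time_count_state (length x) + 2) + 1)
    (s(4 := (\<Sum>q<Suc (length x). walks x q (length x) q), 5 := Suc (length x)))"
proof -
  define f where "f q = s(4 := (\<Sum>q'<q. walks x q' (length x) q'), 5 := q)" for q
  have "runs count_loop (f 0) (Suc (length x) * (time_count_state (length x) + 2) + 1) (f (Suc (length x)))"
    unfolding count_loop_def
  proof (rule runs_While)
    fix j assume "j < Suc (length x)"
    then show "bval (Less (V 5) (Plus (V 2) (N 1))) (f j)"
      using a(1) by (simp add: f_def holds_input_width_def holds_input_def)
  next
    show "\<not> bval (Less (V 5) (Plus (V 2) (N 1))) (f (Suc (length x)))"
      using a(1) by (simp add: f_def holds_input_width_def holds_input_def)
  next
    fix j assume j: "j < Suc (length x)"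
    have "runs count_state (s(4 := (\<Sum>q'<j. walks x q' (length x) q'), 5 := j)) (time_count_state (length x))
       (s(4 := (\<Sum>q'<j. walks x q' (length x) q') + walks x j (length x) j, 5 := Suc j))"
      by (rule count_state_runs) (use a j in auto)
    then show "runs count_state (f j) (time_count_state (length x)) (f (Suc j))" by (simp add: f_def)
  qed
  moreover have "f 0 = s" using a by (simp add: f_def fun_eq_iff)
  ultimately show ?thesis by (simp add: f_def)
qed

definition length_loop :: com where
  "length_loop = While (Less (N 1) (V 19)) (19 ::= Half (V 19) ;; 2 ::= Plus (V 2) (N 1))"

lemma length_loop_runs:
  assumes a: "s 19 = encode x" "s 2 = 0"
  shows "runs length_loop s (length x * (3 + 2) + 1) (s(19 := 1, 2 := length x))"
proof -
  define f where "f j = s(19 := encode x div 2 ^ j, 2 := j)" for j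
  have "runs length_loop (f 0) (length x * (3 + 2) + 1) (f (length x))"
    unfolding length_loop_def
  proof (rule runs_While)
    fix j assume j: "j < length x"
    then have "encode x div 2 ^ j = encode (take (length x - j) x)" by (simp add: encode_div)
    moreover have "take (length x - j) x \<noteq> []" using j by (cases x) auto
    then have "1 < encode (take (length x - j) x)" using encode_gt1 by blast
    ultimately show "bval (Less (N 1) (V 19)) (f j)" by (simp add: f_def)
  next
    have "encode x div 2 ^ length x = 1" by (simp add: encode_div encode_Nil)
    then show "\<not> bval (Less (N 1) (V 19)) (f (length x))" by (simp add: f_def)
  next
    fix j
    show "runs (19 ::= Half (V 19) ;; 2 ::= Plus (V 2) (N 1)) (f j) 3 (f (Suc j))"
      apply (rule runs_mono, rule runs_state_eq, rule runs_Seq, rule runs_Assign, rule runs_Assign)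
       apply (simp add: f_def fun_eq_iff power_Suc2 div_mult2_eq div_div_commute)
      apply simp
      done
  qed
  moreover have "f 0 = s" using a by (simp add: f_def fun_eq_iff)
  moreover have "f (length x) = s(19 := 1, 2 := length x)" by (simp add: f_def encode_div encode_Nil)
  ultimately show ?thesis by simp
qed

definition count_G_prog :: com where
  "count_G_prog = (19 ::= V 0 ;; 2 ::= N 0 ;; length_loop ;; 19 ::= N 0 ;; 3 ::= Plus (V 2) (N 1) ;; 4 ::= N 0 ;; 5 ::= N 0 ;;
     count_loop ;; 24 ::= N 1 ;; shl_field ;; 24 ::= Half (V 24) ;; 1 ::= Minus (V 24) (V 4))"

definition time_count_G :: "nat \<Rightarrow> nat" where
  "time_count_G n = Suc n * (time_count_state n + 2) + 10 * n + 60"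

lemma count_G_prog_runs: "\<exists>S. runs count_G_prog (init_state x) (time_count_G (length x)) S \<and>
   S 1 = 2 ^ length x - (\<Sum>q<Suc (length x). walks x q (length x) q)"
  unfolding count_G_prog_def
  apply (rule exI, rule conjI)
   apply (rule runs_mono)
    apply (rule runs_Seq, rule runs_Assign_eq, simp)+
    apply (rule runs_Seq, rule runs_state_eq, rule length_loop_runs, simp add: init_state_def, simp, simp)
    apply (rule runs_Seq, rule runs_Assign_eq, simp)+
    apply (rule runs_Seq, rule runs_state_eq, rule count_loop_runs)
               apply (simp_all add: init_state_def holds_input_width_def holds_input_def)[11]
    apply (simp | rule refl)
    apply (rule runs_Seq, rule runs_Assign_eq, simp)
    apply (rule runs_Seq, rule runs_state_eq, rule shl_field_runs, simp)
    apply (rule runs_Seq, rule runs_Assign_eq, simp)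
    apply (rule runs_Assign_eq, simp)
   apply (simp add: time_count_G_def)
  apply simp
  done

lemma poly_bounded_time_count_G: "poly_bounded time_count_G"
  unfolding time_count_G_def[abs_def] time_count_state_def time_walk_step_def
    time_transition_body_def time_add_transition_def time_kmp_def time_self_match_def
    time_read_bit_def
  by (intro poly_bounded_intros)

theorem lemma7:
  shows "\<exists>(P::com) (c::nat). \<forall>x :: bool list. \<exists>t s'.
           exec P (init_state x) t s' \<and> s' 1 = card (G_set x) \<and>
           t \<le> c * (length x + 1) ^ c"
proof -
  obtain c where c: "\<And>n. time_count_G n \<le> c * (n + 1) ^ c"
    using poly_bounded_time_count_G unfolding poly_bounded_def by blast
  have "\<exists>t s'. exec count_G_prog (init_state x) t s' \<and> s' 1 = card (G_set x) \<and>
      t \<le> c * (length x + 1) ^ c" for x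
  proof -
    obtain s' where s': "runs count_G_prog (init_state x) (time_count_G (length x)) s'"
      "s' 1 = 2 ^ length x - (\<Sum>q<Suc (length x). walks x q (length x) q)"
      using count_G_prog_runs by blast
    then obtain t where "exec count_G_prog (init_state x) t s'" "t \<le> time_count_G (length x)"
      unfolding runs_def by blast
    moreover have "s' 1 = card (G_set x)"
      using s'(2) by (simp only: card_G_set_walks lessThan_Suc_atMost)
    ultimately show ?thesis
      using c[of "length x"] by (meson order_trans)
  qed
  then show ?thesis
    by blast
qed

end
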